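(* Let $n\ge 1$ and $d\ge 2$ be integers, and let $\Upsilon$ be the normalized Choi state of an $n$-step (not necessarily time-ordered) process matrix, i.e. a density operator on $\mathcal{H}_{\mathrm{i}_0}\otimes\mathcal{H}_{\mathrm{o}_1}\otimes\mathcal{H}_{\mathrm{i}_1}\otimes\mathcal{H}_{\mathrm{o}_2}\otimes\cdots\otimes\mathcal{H}_{\mathrm{i}_{n-1}}\otimes\mathcal{H}_{\mathrm{o}_n}$, where every factor has dimension $d$. For $1\le j\le n$ let $\mathrm{M}_j$ and $\mathrm{N}$ be as defined in the context, and let $\overline{\mathrm{M}_j}=2\ln d-\mathrm{M}_j$. Then for every $1\le k\le n$, $$\mathrm{N}\le 2\sum_{j\ne k}\overline{\mathrm{M}_j}.$$
   Context: Entropies are von Neumann entropies with the natural logarithm, $S(\rho)=-\mathrm{tr}[\rho\ln\rho]$. For a subset $X$ of the tensor factors, $S_X$ denotes the entropy of the reduced state of $\Upsilon$ on $X$ (obtained by tracing out all other factors). Write $S_{\mathrm{i}_{j-1}}$, $S_{\mathrm{o}_j}$ for the single-factor marginal entropies, $S_j$ for the entropy of the marginal on the pair $\mathrm{i}_{j-1}\mathrm{o}_j$, and $S_{1:n}=S(\Upsilon)$. The Markovian correlation of the $j$-th step is $\mathrm{M}_j=S_{\mathrm{i}_{j-1}}+S_{\mathrm{o}_j}-S_j$ (the mutual information between $\mathrm{i}_{j-1}$ and $\mathrm{o}_j$), and the non-Markovian correlation is $\mathrm{N}=\sum_{j=1}^n S_j - S_{1:n}$ (the multipartite mutual information $\mathrm{I}(\mathrm{i}_0\mathrm{o}_1:\mathrm{i}_1\mathrm{o}_2:\cdots:\mathrm{i}_{n-1}\mathrm{o}_n)$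 of $\Upsilon$). No time-ordering trace conditions are imposed on $\Upsilon$ here. *)

theory Defs
  imports "Jordan_Normal_Form.Char_Poly"
begin

text \<open>A system of m tensor factors, each of dimension d, is
  modelled as a complex matrix of dimension d^m. A basis index a < d^m encodes the
  configuration whose k-th factor has value (a div d^k) mod d.
  For the process: factor 2*(j-1) is i_(j-1) and factor 2*j-1 is o_j (j = 1..n).\<close>

definition density_op :: "nat \<Rightarrow> complex mat \<Rightarrow> bool" where
  "density_op D \<rho> \<longleftrightarrow> \<rho> \<in> carrier_mat D D
     \<and> (\<forall>i<D. \<forall>j<D. \<rho> $$ (j, i) = cnj (\<rho> $$ (i, j)))
     \<and> (\<forall>v :: nat \<Rightarrow> complex. Re (\<Sum>i<D. \<Sum>j<D. cnj (v i) * \<rho> $$ (i, j) * v j) \<ge> 0)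
     \<and> (\<Sum>i<D. \<rho> $$ (i, i)) = 1"

text \<open>Eigenvalues with multiplicity (roots of the characteristic polynomial) and
  von Neumann entropy with natural log, S = - tr(rho ln rho) = - sum lambda ln lambda
  (note 0 * ln 0 = 0 in Isabelle).\<close>

definition eigvals_list :: "complex mat \<Rightarrow> complex list" where
  "eigvals_list A = (SOME es. char_poly A = (\<Prod>a\<leftarrow>es. [:- a, 1:]))"

definition vn_entropy :: "complex mat \<Rightarrow> real" where
  "vn_entropy A = - (\<Sum>e\<leftarrow>eigvals_list A. Re e * ln (Re e))"

text \<open>Embedding of an index over the factors listed in xs (digit i of a goes to factor xs!i).\<close>
definition place :: "nat \<Rightarrow> nat list \<Rightarrow> nat \<Rightarrow> nat" where
  "place d xs a = (\<Sum>i<length xs. (a div d ^ i mod d) * d ^ (xs ! i))"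

definition ptrace :: "nat \<Rightarrow> nat \<Rightarrow> nat set \<Rightarrow> complex mat \<Rightarrow> complex mat" where
  "ptrace d m X \<rho> =
     (let xs = sorted_list_of_set X; ys = sorted_list_of_set ({0..<m} - X) in
      mat (d ^ card X) (d ^ card X)
        (\<lambda>(a, b). \<Sum>c<d ^ (m - card X). \<rho> $$ (place d xs a + place d ys c, place d xs b + place d ys c)))"

definition marg_entropy :: "nat \<Rightarrow> nat \<Rightarrow> nat set \<Rightarrow> complex mat \<Rightarrow> real" where
  "marg_entropy d m X \<rho> = vn_entropy (ptrace d m X \<rho>)"

definition S_step :: "nat \<Rightarrow> nat \<Rightarrow> complex mat \<Rightarrow> nat \<Rightarrow> real" where
  "S_step d n \<rho> j = marg_entropy d (2 * n) {2 * j - 2, 2 * j - 1} \<rho>"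

definition markov_corr :: "nat \<Rightarrow> nat \<Rightarrow> complex mat \<Rightarrow> nat \<Rightarrow> real" where
  "markov_corr d n \<rho> j = marg_entropy d (2 * n) {2 * j - 2} \<rho> + marg_entropy d (2 * n) {2 * j - 1} \<rho>
     - S_step d n \<rho> j"

definition nonmarkov_corr :: "nat \<Rightarrow> nat \<Rightarrow> complex mat \<Rightarrow> real" where
  "nonmarkov_corr d n \<rho> = (\<Sum>j = 1..n. S_step d n \<rho> j) - vn_entropy \<rho>"

end

theory Submission
  imports Defs "Jordan_Normal_Form.Schur_Decomposition"
begin

text \<open>Write P_j for the pair of factors i_(j-1) o_j, so that S_j is the entropy of the marginal on
  P_j. Each single factor has entropy at most ln d, hence S_j <= 2 ln d - M_j. By the Araki-Lieb
  inequality S(P_k) <= S(Upsilon) + S(R) for the complement R of P_k, and by subadditivity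
  S(R) <= sum_(j<>k) S_j. Therefore N = S_k + sum_(j<>k) S_j - S(Upsilon) <= 2 sum_(j<>k) S_j.

  The quantum inequalities are proved from the spectral theorem. Measuring a state in the product
  of eigenbases of its two marginals gives a classical joint distribution whose entropy dominates
  the von Neumann entropy (the overlaps with an eigenbasis form a doubly substochastic matrix and
  -x ln x is concave) and whose marginals are the spectra of the reduced states; classical
  subadditivity then gives quantum subadditivity. Araki-Lieb follows by purifying the state and
  using that the two marginals N N^* and N^* N of a pure state have the same entropy.\<close>

section \<open>Adjoints, unitary and Hermitian matrices\<close>

lemma index_mult_mat_sum:
  assumes "A \<in> carrier_mat n m" "B \<in> carrier_mat m k" "i < n" "j < k"
  shows "(A * B) $$ (i,j) = (\<Sum>l<m. A $$ (i,l) * B $$ (l,j))"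
  using assms by (simp add: index_mult_mat scalar_prod_def atLeast0LessThan)

lemma mat_adjoint_index [simp]:
  "i < dim_col A \<Longrightarrow> j < dim_row A \<Longrightarrow> mat_adjoint A $$ (i,j) = cnj (A $$ (j,i))"
  by (simp add: mat_adjoint_def mat_of_rows_def)

lemma mat_adjoint_dim [simp]:
  "dim_row (mat_adjoint (A :: 'a :: conjugatable_field mat)) = dim_col A" "dim_col (mat_adjoint A) = dim_row A"
  by (simp_all add: mat_adjoint_def)

lemma mat_adjoint_carrier [simp]: "(A :: complex mat) \<in> carrier_mat n m \<Longrightarrow> mat_adjoint A \<in> carrier_mat m n"
  unfolding carrier_mat_def by simp

lemma mat_adjoint_adjoint [simp]: "mat_adjoint (mat_adjoint (A :: complex mat)) = A"
  by (rule eq_matI) simp_all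

lemma index_adjoint_mult:
  fixes A B :: "complex mat"
  assumes "A \<in> carrier_mat n m" "B \<in> carrier_mat n k" "i < m" "j < k"
  shows "(mat_adjoint A * B) $$ (i,j) = (\<Sum>l<n. cnj (A $$ (l,i)) * B $$ (l,j))"
  using assms by (subst index_mult_mat_sum[of _ m n _ k]) auto

lemma index_mult_adjoint:
  fixes A B :: "complex mat"
  assumes "A \<in> carrier_mat n m" "B \<in> carrier_mat k m" "i < n" "j < k"
  shows "(A * mat_adjoint B) $$ (i,j) = (\<Sum>l<m. A $$ (i,l) * cnj (B $$ (j,l)))"
  using assms by (subst index_mult_mat_sum[of _ n m _ k]) auto

lemma mat_adjoint_mult:
  fixes A B :: "complex mat"
  assumes A: "A \<in> carrier_mat n m" and B: "B \<in> carrier_mat m k"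
  shows "mat_adjoint (A * B) = mat_adjoint B * mat_adjoint A"
proof (rule eq_matI)
  fix i j assume "i < dim_row (mat_adjoint B * mat_adjoint A)" "j < dim_col (mat_adjoint B * mat_adjoint A)"
  with A B have i: "i < k" and j: "j < n" by auto
  have "mat_adjoint (A * B) $$ (i,j) = cnj ((A * B) $$ (j,i))"
    using A B i j by simp
  also have "\<dots> = (\<Sum>l<m. cnj (B $$ (l,i)) * cnj (A $$ (j,l)))"
    unfolding index_mult_mat_sum[OF A B j i] cnj_sum by (simp add: mult.commute)
  also have "\<dots> = (mat_adjoint B * mat_adjoint A) $$ (i,j)"
    unfolding index_mult_adjoint[OF mat_adjoint_carrier[OF B] A i j] using B i by simp
  finally show "mat_adjoint (A * B) $$ (i, j) = (mat_adjoint B * mat_adjoint A) $$ (i, j)" .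
qed (use A B in simp_all)

definition unitary :: "nat \<Rightarrow> complex mat \<Rightarrow> bool" where
  "unitary n U \<longleftrightarrow> U \<in> carrier_mat n n \<and> mat_adjoint U * U = 1\<^sub>m n \<and> U * mat_adjoint U = 1\<^sub>m n"

definition hermitian :: "nat \<Rightarrow> complex mat \<Rightarrow> bool" where
  "hermitian n A \<longleftrightarrow> A \<in> carrier_mat n n \<and> mat_adjoint A = A"

definition real_diag_mat :: "nat \<Rightarrow> (nat \<Rightarrow> real) \<Rightarrow> complex mat" where
  "real_diag_mat n l = mat n n (\<lambda>(i,j). if i = j then complex_of_real (l i) else 0)"

lemma real_diag_mat_carrier [simp]: "real_diag_mat n l \<in> carrier_mat n n"
  by (simp add: real_diag_mat_def)

lemma real_diag_mat_dim [simp]: "dim_row (real_diag_mat n l) = n" "dim_col (real_diag_mat n l) = n"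
  by (simp_all add: real_diag_mat_def)

lemma real_diag_mat_one: "real_diag_mat n (\<lambda>_. 1) = 1\<^sub>m n"
  by (rule eq_matI) (simp_all add: real_diag_mat_def)

lemma hermitian_iff_entries:
  "hermitian n A \<longleftrightarrow> A \<in> carrier_mat n n \<and> (\<forall>i<n. \<forall>j<n. A $$ (j,i) = cnj (A $$ (i,j)))"
proof (cases "A \<in> carrier_mat n n")
  case True
  have "mat_adjoint A = A \<longleftrightarrow> (\<forall>i<n. \<forall>j<n. mat_adjoint A $$ (j,i) = A $$ (j,i))"
  proof
    assume "mat_adjoint A = A"
    then show "\<forall>i<n. \<forall>j<n. mat_adjoint A $$ (j,i) = A $$ (j,i)" by simp
  next
    assume "\<forall>i<n. \<forall>j<n. mat_adjoint A $$ (j,i) = A $$ (j,i)"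
    then show "mat_adjoint A = A" using True by (intro eq_matI) auto
  qed
  also have "\<dots> \<longleftrightarrow> (\<forall>i<n. \<forall>j<n. cnj (A $$ (i,j)) = A $$ (j,i))"
    using True by simp
  also have "\<dots> \<longleftrightarrow> (\<forall>i<n. \<forall>j<n. A $$ (j,i) = cnj (A $$ (i,j)))"
    by metis
  finally show ?thesis using True unfolding hermitian_def by blast
qed (simp add: hermitian_def)

lemma unitaryI:
  assumes "U \<in> carrier_mat n n" "mat_adjoint U * U = 1\<^sub>m n"
  shows "unitary n U"
  using assms mat_mult_left_right_inverse[OF mat_adjoint_carrier[OF assms(1)] assms(1)]
  unfolding unitary_def by blast

lemma mat_adjoint_one [simp]: "mat_adjoint (1\<^sub>m n) = (1\<^sub>m n :: complex mat)"
  by (rule eq_matI) simp_all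

lemma unitary_one: "unitary n (1\<^sub>m n)"
  by (simp add: unitary_def)

lemma unitary_mult:
  assumes U: "unitary n U" and V: "unitary n V"
  shows "unitary n (U * V)"
proof (rule unitaryI)
  have Uc: "U \<in> carrier_mat n n" and U1: "mat_adjoint U * U = 1\<^sub>m n"
    and Vc: "V \<in> carrier_mat n n" and V1: "mat_adjoint V * V = 1\<^sub>m n"
    using U V unfolding unitary_def by auto
  show "U * V \<in> carrier_mat n n" using Uc Vc by auto
  have "mat_adjoint (U * V) * (U * V) = mat_adjoint V * ((mat_adjoint U * U) * V)"
    using Uc Vc by (simp add: mat_adjoint_mult[OF Uc Vc] assoc_mult_mat[of _ n n _ n _ n])
  then show "mat_adjoint (U * V) * (U * V) = 1\<^sub>m n" using Vc V1 by (simp add: U1)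
qed

lemma unitary_cols_orthonormal:
  assumes "unitary n U" "i < n" "j < n"
  shows "(\<Sum>x<n. cnj (U $$ (x,i)) * U $$ (x,j)) = (if i = j then 1 else 0)"
  using assms index_adjoint_mult[of U n n U n i j] unfolding unitary_def by auto

lemma unitary_rows_orthonormal:
  assumes "unitary n U" "x < n" "y < n"
  shows "(\<Sum>k<n. U $$ (x,k) * cnj (U $$ (y,k))) = (if x = y then 1 else 0)"
  using assms index_mult_adjoint[of U n n U n x y] unfolding unitary_def by auto

lemma index_mult_real_diag_adjoint:
  assumes N: "N \<in> carrier_mat a c" and i: "i < a" and j: "j < a"
  shows "(N * real_diag_mat c l * mat_adjoint N) $$ (i,j) = (\<Sum>k<c. N $$ (i,k) * l k * cnj (N $$ (j,k)))"
proof -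
  have ND: "N * real_diag_mat c l \<in> carrier_mat a c" using N by simp
  have "(N * real_diag_mat c l * mat_adjoint N) $$ (i,j)
      = (\<Sum>k<c. (N * real_diag_mat c l) $$ (i,k) * cnj (N $$ (j,k)))"
    by (rule index_mult_adjoint[OF ND N i j])
  also have "\<dots> = (\<Sum>k<c. (\<Sum>r<c. N $$ (i,r) * real_diag_mat c l $$ (r,k)) * cnj (N $$ (j,k)))"
    by (intro sum.cong refl) (simp add: index_mult_mat_sum[OF N real_diag_mat_carrier i])
  also have "\<dots> = (\<Sum>k<c. N $$ (i,k) * l k * cnj (N $$ (j,k)))"
    by (intro sum.cong refl) (simp add: real_diag_mat_def if_distrib cong: if_cong)
  finally show ?thesis .
qed

lemma sum_mult_cnj_eq_norm:
  "(\<Sum>k\<in>A. f k * cnj (f k)) = complex_of_real (\<Sum>k\<in>A. (cmod (f k))\<^sup>2)"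
  by (simp only: of_real_sum complex_norm_square)

lemma unitary_col_norm:
  assumes U: "unitary n U" and k: "k < n"
  shows "(\<Sum>x<n. (cmod (U $$ (x,k)))\<^sup>2) = 1"
proof -
  have "(\<Sum>x<n. U $$ (x,k) * cnj (U $$ (x,k))) = 1"
    using unitary_cols_orthonormal[OF U k k] by (simp add: mult.commute)
  then have "complex_of_real (\<Sum>x<n. (cmod (U $$ (x,k)))\<^sup>2) = 1" unfolding sum_mult_cnj_eq_norm .
  then show ?thesis by (simp only: of_real_eq_1_iff)
qed

lemma unitary_with_first_col:
  assumes v: "v \<in> carrier_vec n" and v0: "v \<noteq> 0\<^sub>v n"
  obtains W c where "unitary n W" "col W 0 = c \<cdot>\<^sub>v v"
proof -
  interpret cof_vec_space n "TYPE(complex)" .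
  define b where "b = basis_completion v"
  from basis_completion[OF v v0, folded b_def]
  have dist_b: "distinct b" and indep: "\<not> lin_dep (set b)" and b: "set b \<subseteq> carrier_vec n"
    and hdb: "hd b = v" and len_b: "length b = n" by auto
  have n: "n > 0" using v v0 by (cases n) auto
  from hdb len_b n obtain vs where bv: "b = v # vs" by (cases b) auto
  define ws where "ws = gram_schmidt n b"
  from gram_schmidt_result[OF b dist_b indep ws_def]
  have ws: "set ws \<subseteq> carrier_vec n" "corthogonal ws" "length ws = n" by (auto simp: len_b)
  from gram_schmidt_hd[OF v, of vs, folded bv] have "hd ws = v" unfolding ws_def .
  then have ws0: "ws ! 0 = v" using ws(3) n by (cases ws) auto
  have wsc: "ws ! j \<in> carrier_vec n" if "j < n" for j using ws that by auto
  have sprod: "ws ! j \<bullet>c ws ! i = (\<Sum>k<n. cnj (ws ! i $ k) * ws ! j $ k)" if "i < n" "j < n" for i j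
    using wsc[OF that(1)] wsc[OF that(2)] by (simp add: scalar_prod_def atLeast0LessThan mult.commute)
  define s where "s j = sqrt (\<Sum>k<n. (cmod (ws ! j $ k))\<^sup>2)" for j
  have norm_sq: "ws ! j \<bullet>c ws ! j = complex_of_real (s j) * complex_of_real (s j)" if "j < n" for j
  proof -
    have "ws ! j \<bullet>c ws ! j = (\<Sum>k<n. ws ! j $ k * cnj (ws ! j $ k))"
      unfolding sprod[OF that that] by (simp add: mult.commute)
    also have "\<dots> = complex_of_real (s j * s j)"
      unfolding sum_mult_cnj_eq_norm s_def by (simp add: sum_nonneg)
    finally show ?thesis by simp
  qed
  have s_pos: "s j > 0" if "j < n" for j
  proof -
    have "s j \<noteq> 0" using corthogonalD[OF ws(2), of j j] that ws(3) norm_sq[OF that] by auto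
    moreover have "s j \<ge> 0" unfolding s_def by (simp add: sum_nonneg)
    ultimately show ?thesis by simp
  qed
  define W where "W = mat n n (\<lambda>(k,j). ws ! j $ k / complex_of_real (s j))"
  have W: "W \<in> carrier_mat n n" unfolding W_def by auto
  have "mat_adjoint W * W = 1\<^sub>m n"
  proof (rule eq_matI)
    fix i j assume "i < dim_row (1\<^sub>m n)" "j < dim_col (1\<^sub>m n)"
    then have i: "i < n" and j: "j < n" by auto
    have "(mat_adjoint W * W) $$ (i,j) = (\<Sum>k<n. cnj (W $$ (k,i)) * W $$ (k,j))"
      by (rule index_adjoint_mult[OF W W i j])
    also have "\<dots> = (ws ! j \<bullet>c ws ! i) / (complex_of_real (s i) * complex_of_real (s j))"
      using i j unfolding sprod[OF i j] by (simp add: W_def sum_divide_distrib)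
    also have "\<dots> = 1\<^sub>m n $$ (i,j)"
      using corthogonalD[OF ws(2), of j i] i j ws(3) norm_sq[OF j] s_pos[OF j] by auto
    finally show "(mat_adjoint W * W) $$ (i,j) = 1\<^sub>m n $$ (i,j)" .
  qed (use W in auto)
  then have "unitary n W" using W by (rule unitaryI[rotated])
  moreover have "col W 0 = (1 / complex_of_real (s 0)) \<cdot>\<^sub>v v"
    using n v unfolding W_def ws0[symmetric] by (intro eq_vecI) auto
  ultimately show ?thesis using that by blast
qed

section \<open>The spectral theorem for Hermitian matrices\<close>

definition one_dsum_mat :: "nat \<Rightarrow> complex mat \<Rightarrow> complex mat" where
  "one_dsum_mat m V = mat (Suc m) (Suc m)
     (\<lambda>(i,j). if i = 0 \<and> j = 0 then 1 else if i = 0 \<or> j = 0 then 0 else V $$ (i - 1, j - 1))"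

lemma one_dsum_mat_carrier [simp]: "one_dsum_mat m V \<in> carrier_mat (Suc m) (Suc m)"
  unfolding one_dsum_mat_def by simp

lemma unitary_one_dsum_mat:
  assumes V: "unitary m V"
  shows "unitary (Suc m) (one_dsum_mat m V)"
proof (rule unitaryI)
  let ?Q = "one_dsum_mat m V"
  show Q: "?Q \<in> carrier_mat (Suc m) (Suc m)" by simp
  show "mat_adjoint ?Q * ?Q = 1\<^sub>m (Suc m)"
  proof (rule eq_matI)
    fix i j assume "i < dim_row (1\<^sub>m (Suc m))" "j < dim_col (1\<^sub>m (Suc m))"
    then have i: "i < Suc m" and j: "j < Suc m" by auto
    have "(mat_adjoint ?Q * ?Q) $$ (i,j)
        = cnj (?Q $$ (0,i)) * ?Q $$ (0,j) + (\<Sum>k<m. cnj (?Q $$ (Suc k,i)) * ?Q $$ (Suc k,j))"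
      unfolding index_adjoint_mult[OF Q Q i j] by (rule sum.lessThan_Suc_shift)
    also have "\<dots> = 1\<^sub>m (Suc m) $$ (i,j)"
      using i j unitary_cols_orthonormal[OF V, of "i - 1" "j - 1"]
      by (cases i; cases j) (auto simp: one_dsum_mat_def)
    finally show "(mat_adjoint ?Q * ?Q) $$ (i,j) = 1\<^sub>m (Suc m) $$ (i,j)" .
  qed (simp_all add: one_dsum_mat_def)
qed

lemma hermitian_unitary_conj:
  assumes A: "hermitian n A" and W: "W \<in> carrier_mat n n"
  shows "hermitian n (mat_adjoint W * A * W)"
proof -
  have Ac: "A \<in> carrier_mat n n" and adjA: "mat_adjoint A = A" using A unfolding hermitian_def by auto
  have WA: "mat_adjoint W * A \<in> carrier_mat n n" using W Ac by (metis mat_adjoint_carrier mult_carrier_mat)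
  have "mat_adjoint (mat_adjoint W * A * W) = mat_adjoint W * (mat_adjoint A * W)"
    using W Ac by (simp add: mat_adjoint_mult[OF WA W] mat_adjoint_mult[of _ n n _ n])
  also have "\<dots> = mat_adjoint W * A * W"
    unfolding adjA using W Ac by (simp add: assoc_mult_mat[of _ n n _ n _ n] mult_carrier_mat)
  finally show ?thesis unfolding hermitian_def using WA W by simp
qed

lemma hermitian_deflation:
  assumes A: "hermitian (Suc m) A"
  obtains W e where "unitary (Suc m) W" "hermitian (Suc m) (mat_adjoint W * A * W)"
    "\<And>i. i < Suc m \<Longrightarrow> (mat_adjoint W * A * W) $$ (i,0) = (if i = 0 then complex_of_real e else 0)"
proof -
  let ?n = "Suc m"
  have Ac: "A \<in> carrier_mat ?n ?n" using A unfolding hermitian_def by simp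
  obtain es where es: "char_poly A = (\<Prod>a\<leftarrow>es. [:- a, 1:])" "length es = ?n"
    using char_poly_factorized[OF Ac] by blast
  then obtain e es' where "es = e # es'" by (cases es) auto
  then have "poly (char_poly A) e = 0" unfolding es(1) by simp
  then have "eigenvalue A e" using eigenvalue_root_char_poly[OF Ac] by simp
  then have "eigenvector A (find_eigenvector A e) e" by (rule find_eigenvector[OF Ac])
  then obtain v where v: "v \<in> carrier_vec ?n" "v \<noteq> 0\<^sub>v ?n" "A *\<^sub>v v = e \<cdot>\<^sub>v v"
    unfolding eigenvector_def using Ac by auto
  obtain W c where W: "unitary ?n W" and colW: "col W 0 = c \<cdot>\<^sub>v v"
    using unitary_with_first_col[OF v(1,2)] by blast
  have Wc: "W \<in> carrier_mat ?n ?n" and W1: "mat_adjoint W * W = 1\<^sub>m ?n"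
    using W unfolding unitary_def by auto
  have AW0: "(A * W) $$ (k,0) = e * W $$ (k,0)" if "k < ?n" for k
  proof -
    have eig: "A *\<^sub>v col W 0 = e \<cdot>\<^sub>v col W 0"
      unfolding colW using v Ac by (simp add: mult_mat_vec smult_smult_assoc mult.commute)
    have "(A * W) $$ (k,0) = (A *\<^sub>v col W 0) $ k" using Ac Wc that by simp
    then show ?thesis unfolding eig using Wc that by simp
  qed
  define A' where "A' = mat_adjoint W * A * W"
  have herm': "hermitian ?n A'" unfolding A'_def by (rule hermitian_unitary_conj[OF A Wc])
  have A'col: "A' $$ (i,0) = (if i = 0 then e else 0)" if i: "i < ?n" for i
  proof -
    have "A' = mat_adjoint W * (A * W)" unfolding A'_def using Ac Wc by (simp add: assoc_mult_mat[of _ ?n ?n])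
    then have "A' $$ (i,0) = (\<Sum>k<?n. mat_adjoint W $$ (i,k) * (A * W) $$ (k,0))"
      using index_mult_mat_sum[OF mat_adjoint_carrier[OF Wc] mult_carrier_mat[OF Ac Wc] i zero_less_Suc]
      by simp
    also have "\<dots> = e * (\<Sum>k<?n. mat_adjoint W $$ (i,k) * W $$ (k,0))"
      unfolding sum_distrib_left by (intro sum.cong refl) (simp add: AW0 del: index_mult_mat)
    also have "(\<Sum>k<?n. mat_adjoint W $$ (i,k) * W $$ (k,0)) = (mat_adjoint W * W) $$ (i,0)"
      by (rule index_mult_mat_sum[OF mat_adjoint_carrier[OF Wc] Wc i zero_less_Suc, symmetric])
    finally show ?thesis unfolding W1 using i by simp
  qed
  have "A' $$ (0,0) = cnj (A' $$ (0,0))" using herm' unfolding hermitian_iff_entries by blast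
  then have "cnj e = e" using A'col[of 0] by simp
  then have e_real: "complex_of_real (Re e) = e" by (simp add: Reals_cnj_iff of_real_Re)
  show ?thesis
  proof (rule that[OF W])
    show "hermitian ?n (mat_adjoint W * A * W)" using herm' unfolding A'_def .
    show "(mat_adjoint W * A * W) $$ (i,0) = (if i = 0 then complex_of_real (Re e) else 0)"
      if "i < ?n" for i
      using A'col[OF that] unfolding A'_def e_real .
  qed
qed

lemma unitary_conj_cancel:
  assumes U: "unitary n U" and A: "A \<in> carrier_mat n n"
  shows "U * (mat_adjoint U * A * U) * mat_adjoint U = A"
proof -
  have Uc: "U \<in> carrier_mat n n" and aU: "mat_adjoint U \<in> carrier_mat n n"
    and U2: "U * mat_adjoint U = 1\<^sub>m n" using U unfolding unitary_def by auto
  have "U * (mat_adjoint U * A * U) * mat_adjoint U = U * (mat_adjoint U * A * U * mat_adjoint U)"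
    using Uc aU A by (intro assoc_mult_mat) auto
  also have "mat_adjoint U * A * U * mat_adjoint U = mat_adjoint U * A * (U * mat_adjoint U)"
    using Uc aU A by (intro assoc_mult_mat) auto
  also have "\<dots> = mat_adjoint U * A" using U2 aU A by simp
  also have "U * (mat_adjoint U * A) = (U * mat_adjoint U) * A"
    using Uc aU A by (intro assoc_mult_mat[symmetric]) auto
  finally show ?thesis using A by (simp add: U2)
qed

lemma conj_mat_mult:
  fixes U V D :: "complex mat"
  assumes U: "U \<in> carrier_mat n n" and V: "V \<in> carrier_mat n n" and D: "D \<in> carrier_mat n n"
  shows "U * (V * D * mat_adjoint V) * mat_adjoint U = (U * V) * D * mat_adjoint (U * V)"
proof -
  have aU: "mat_adjoint U \<in> carrier_mat n n" and aV: "mat_adjoint V \<in> carrier_mat n n"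
    using U V by auto
  have "U * (V * D * mat_adjoint V) = U * (V * D) * mat_adjoint V"
    using U V D aV by (intro assoc_mult_mat[symmetric]) auto
  also have "U * (V * D) = U * V * D" using U V D by (intro assoc_mult_mat[symmetric]) auto
  finally have "U * (V * D * mat_adjoint V) * mat_adjoint U = U * V * D * mat_adjoint V * mat_adjoint U"
    by simp
  also have "\<dots> = U * V * D * (mat_adjoint V * mat_adjoint U)"
    using U V D aU aV by (intro assoc_mult_mat) auto
  finally show ?thesis by (simp add: mat_adjoint_mult[OF U V])
qed

theorem hermitian_spectral:
  assumes "hermitian n A"
  shows "\<exists>U l. unitary n U \<and> A = U * real_diag_mat n l * mat_adjoint U"
  using assms
proof (induction n arbitrary: A)
  case 0
  then have "A \<in> carrier_mat 0 0" by (simp add: hermitian_def)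
  then have "A = 1\<^sub>m 0 * real_diag_mat 0 (\<lambda>_. 0) * mat_adjoint (1\<^sub>m 0)"
    by (intro eq_matI) simp_all
  then show ?case using unitary_one by blast
next
  case (Suc m A)
  let ?n = "Suc m"
  obtain W e where W: "unitary ?n W" and herm': "hermitian ?n (mat_adjoint W * A * W)"
    and col0: "\<And>i. i < ?n \<Longrightarrow> (mat_adjoint W * A * W) $$ (i,0) = (if i = 0 then complex_of_real e else 0)"
    using hermitian_deflation[OF Suc.prems] by blast
  define A' where "A' = mat_adjoint W * A * W"
  have A'c: "A' \<in> carrier_mat ?n ?n" and A'h: "\<And>i j. i < ?n \<Longrightarrow> j < ?n \<Longrightarrow> A' $$ (j,i) = cnj (A' $$ (i,j))"
    using herm' unfolding A'_def hermitian_iff_entries by blast+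
  have row0: "A' $$ (0,j) = (if j = 0 then complex_of_real e else 0)" if "j < ?n" for j
    using A'h[OF that, of 0] col0[OF that] unfolding A'_def by simp
  define A3 where "A3 = mat m m (\<lambda>(i,j). A' $$ (Suc i, Suc j))"
  have "hermitian m A3" unfolding hermitian_iff_entries
  proof (intro conjI allI impI)
    fix i j assume "i < m" "j < m"
    then show "A3 $$ (j, i) = cnj (A3 $$ (i, j))" unfolding A3_def using A'h[of "Suc i" "Suc j"] by simp
  qed (simp add: A3_def)
  with Suc.IH obtain V l3 where V: "unitary m V" and A3: "A3 = V * real_diag_mat m l3 * mat_adjoint V"
    by blast
  have Vc: "V \<in> carrier_mat m m" using V unfolding unitary_def by auto
  define Q where "Q = one_dsum_mat m V"
  define l where "l i = (if i = 0 then e else l3 (i - 1))" for i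
  have Q: "unitary ?n Q" unfolding Q_def by (rule unitary_one_dsum_mat[OF V])
  have Qc: "Q \<in> carrier_mat ?n ?n" unfolding Q_def by simp
  have A'eq: "A' = Q * real_diag_mat ?n l * mat_adjoint Q"
  proof (rule eq_matI)
    fix i j assume "i < dim_row (Q * real_diag_mat ?n l * mat_adjoint Q)"
      "j < dim_col (Q * real_diag_mat ?n l * mat_adjoint Q)"
    then have i: "i < ?n" and j: "j < ?n" using Qc by auto
    have "(Q * real_diag_mat ?n l * mat_adjoint Q) $$ (i,j)
        = Q $$ (i,0) * l 0 * cnj (Q $$ (j,0)) + (\<Sum>k<m. Q $$ (i,Suc k) * l (Suc k) * cnj (Q $$ (j,Suc k)))"
      unfolding index_mult_real_diag_adjoint[OF Qc i j] by (rule sum.lessThan_Suc_shift)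
    also have "\<dots> = A' $$ (i,j)"
    proof (cases i; cases j)
      fix i' j' assume ij: "i = Suc i'" "j = Suc j'"
      then have "A' $$ (i,j) = (V * real_diag_mat m l3 * mat_adjoint V) $$ (i',j')"
        using i j unfolding A3[symmetric] A3_def by simp
      then show ?thesis using i j ij by (simp add: index_mult_real_diag_adjoint[OF Vc] Q_def one_dsum_mat_def l_def)
    qed (use i j row0 col0 in \<open>auto simp: Q_def one_dsum_mat_def l_def A'_def\<close>)
    finally show "A' $$ (i,j) = (Q * real_diag_mat ?n l * mat_adjoint Q) $$ (i,j)" by simp
  qed (use Qc A'c in simp_all)
  have "A = W * A' * mat_adjoint W"
    unfolding A'_def using unitary_conj_cancel[OF W] Suc.prems by (simp add: hermitian_def)
  also have "\<dots> = (W * Q) * real_diag_mat ?n l * mat_adjoint (W * Q)"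
    unfolding A'eq using W by (intro conj_mat_mult[OF _ Qc real_diag_mat_carrier]) (simp add: unitary_def)
  finally show ?case using unitary_mult[OF W Q] by blast
qed

section \<open>Entropy of probability vectors\<close>

definition eta :: "real \<Rightarrow> real" where "eta x = - (x * ln x)"

lemma ln_sub_ln_ge:
  fixes x y :: real
  assumes "x > 0" "y > 0"
  shows "ln x - ln y \<ge> 1 - y / x"
proof -
  have "ln (y / x) \<le> y / x - 1" using assms by (intro ln_le_minus_one) simp
  moreover have "ln (y / x) = ln y - ln x" using assms by (simp add: ln_div)
  ultimately show ?thesis by linarith
qed

lemma sum_weighted_eta_le:
  fixes w x :: "'k \<Rightarrow> real"
  assumes K: "finite K" and w: "\<And>k. k \<in> K \<Longrightarrow> w k \<ge> 0" and x: "\<And>k. k \<in> K \<Longrightarrow> x k \<ge> 0"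
    and w_sum: "(\<Sum>k\<in>K. w k) \<le> 1"
  shows "(\<Sum>k\<in>K. w k * eta (x k)) \<le> eta (\<Sum>k\<in>K. w k * x k)"
proof -
  define p where "p = (\<Sum>k\<in>K. w k * x k)"
  have p0: "p \<ge> 0" unfolding p_def using w x by (intro sum_nonneg) auto
  show ?thesis
  proof (cases "p = 0")
    case True
    then have "\<forall>k\<in>K. w k * x k = 0"
      using sum_nonneg_eq_0_iff[OF K, of "\<lambda>k. w k * x k"] w x unfolding p_def by auto
    then have "(\<Sum>k\<in>K. w k * eta (x k)) = 0" unfolding eta_def by (intro sum.neutral) auto
    then show ?thesis using True unfolding p_def eta_def by simp
  next
    case False
    then have pp: "p > 0" using p0 by auto
    have pointwise: "w k * x k * (ln (x k) - ln p) \<ge> w k * x k - w k * p" if k: "k \<in> K" for k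
    proof (cases "x k = 0")
      case True then show ?thesis using w[OF k] pp by simp
    next
      case False
      then have lk: "x k > 0" using x[OF k] by auto
      have "w k * x k * (ln (x k) - ln p) \<ge> w k * x k * (1 - p / x k)"
        using ln_sub_ln_ge[OF lk pp] w[OF k] lk by (intro mult_left_mono) auto
      also have "w k * x k * (1 - p / x k) = w k * x k - w k * p" using lk by (simp add: field_simps)
      finally show ?thesis .
    qed
    have "(\<Sum>k\<in>K. w k * x k - w k * p) = (\<Sum>k\<in>K. w k * x k) - (\<Sum>k\<in>K. w k) * p"
      by (simp add: sum_subtractf sum_distrib_right)
    then have "p - p * (\<Sum>k\<in>K. w k) = (\<Sum>k\<in>K. w k * x k - w k * p)"
      unfolding p_def by simp
    also have "\<dots> \<le> (\<Sum>k\<in>K. w k * x k * (ln (x k) - ln p))"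
      by (rule sum_mono) (rule pointwise)
    also have "\<dots> = (\<Sum>k\<in>K. w k * x k * ln (x k)) - p * ln p"
      unfolding p_def by (simp add: right_diff_distrib sum_subtractf sum_distrib_right)
    finally have "(\<Sum>k\<in>K. w k * x k * ln (x k)) - p * ln p \<ge> 0"
      using w_sum pp by (smt (verit) mult_left_le)
    then show ?thesis unfolding eta_def p_def[symmetric] by (simp add: sum_negf ac_simps)
  qed
qed

lemma sum_eta_le_marginals:
  fixes p :: "nat \<Rightarrow> nat \<Rightarrow> real"
  assumes p: "\<And>a c. a < NA \<Longrightarrow> c < NC \<Longrightarrow> p a c \<ge> 0"
    and p_sum: "(\<Sum>a<NA. \<Sum>c<NC. p a c) = 1"
  shows "(\<Sum>a<NA. \<Sum>c<NC. eta (p a c))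
    \<le> (\<Sum>a<NA. eta (\<Sum>c<NC. p a c)) + (\<Sum>c<NC. eta (\<Sum>a<NA. p a c))"
proof -
  define q where "q a = (\<Sum>c<NC. p a c)" for a
  define r where "r c = (\<Sum>a<NA. p a c)" for c
  have q0: "q a \<ge> 0" if "a < NA" for a unfolding q_def using p that by (intro sum_nonneg) auto
  have r0: "r c \<ge> 0" if "c < NC" for c unfolding r_def using p that by (intro sum_nonneg) auto
  have pointwise: "p a c * (ln (p a c) - ln (q a) - ln (r c)) \<ge> p a c - q a * r c"
    if a: "a < NA" and c: "c < NC" for a c
  proof (cases "p a c = 0")
    case True then show ?thesis using q0[OF a] r0[OF c] by simp
  next
    case False
    then have pp: "p a c > 0" using p[OF a c] by auto
    have "p a c \<le> q a" unfolding q_def using p a c by (intro member_le_sum) auto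
    then have qp: "q a > 0" using pp by auto
    have "p a c \<le> r c" unfolding r_def using p a c
      by (intro member_le_sum[of a "{..<NA}" "\<lambda>a. p a c"]) auto
    then have rp: "r c > 0" using pp by auto
    have "p a c * (1 - q a * r c / p a c) \<le> p a c * (ln (p a c) - ln (q a * r c))"
      using ln_sub_ln_ge[OF pp] qp rp pp by (intro mult_left_mono) auto
    moreover have "p a c * (1 - q a * r c / p a c) = p a c - q a * r c" using pp by (simp add: field_simps)
    moreover have "ln (q a * r c) = ln (q a) + ln (r c)" using qp rp by (simp add: ln_mult)
    ultimately show ?thesis by (simp add: algebra_simps)
  qed
  have qr_sum: "(\<Sum>a<NA. \<Sum>c<NC. q a * r c) = 1"
  proof -
    have "(\<Sum>a<NA. q a) = 1" "(\<Sum>c<NC. r c) = 1"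
      using p_sum unfolding q_def r_def by (simp_all add: sum.swap[of _ "{..<NC}"])
    then show ?thesis by (simp add: sum_product[symmetric])
  qed
  have "0 = (\<Sum>a<NA. \<Sum>c<NC. p a c - q a * r c)"
    using p_sum qr_sum by (simp add: sum_subtractf)
  also have "\<dots> \<le> (\<Sum>a<NA. \<Sum>c<NC. p a c * (ln (p a c) - ln (q a) - ln (r c)))"
    by (intro sum_mono pointwise) auto
  also have "\<dots> = (\<Sum>a<NA. \<Sum>c<NC. p a c * ln (p a c)) - (\<Sum>a<NA. q a * ln (q a)) - (\<Sum>c<NC. r c * ln (r c))"
    unfolding q_def r_def
    by (simp add: right_diff_distrib sum_subtractf sum_distrib_right sum.swap[of _ "{..<NC}"])
  finally show ?thesis unfolding eta_def q_def[symmetric] r_def[symmetric] by (simp add: sum_negf)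
qed

lemma sum_eta_le_ln:
  fixes q :: "nat \<Rightarrow> real"
  assumes q: "\<And>a. a < N \<Longrightarrow> q a \<ge> 0" and q_sum: "(\<Sum>a<N. q a) = 1"
  shows "(\<Sum>a<N. eta (q a)) \<le> ln (real N)"
proof -
  have N: "N > 0" using q_sum by (cases N) auto
  have pointwise: "q a * (ln (q a) + ln (real N)) \<ge> q a - 1 / real N" if a: "a < N" for a
  proof (cases "q a = 0")
    case True then show ?thesis using N by simp
  next
    case False
    then have qp: "q a > 0" using q[OF a] by auto
    have "1 - (1 / real N) / q a \<le> ln (q a) - ln (1 / real N)"
      by (rule ln_sub_ln_ge[OF qp]) (use N in simp)
    then have "q a * (1 - (1 / real N) / q a) \<le> q a * (ln (q a) - ln (1 / real N))"
      using qp by (intro mult_left_mono) auto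
    moreover have "q a * (1 - (1 / real N) / q a) = q a - 1 / real N" using qp by (simp add: field_simps)
    ultimately show ?thesis using N by (simp add: ln_div)
  qed
  have "0 = (\<Sum>a<N. q a - 1 / real N)" using q_sum N by (simp add: sum_subtractf)
  also have "\<dots> \<le> (\<Sum>a<N. q a * (ln (q a) + ln (real N)))" by (intro sum_mono pointwise) auto
  also have "\<dots> = (\<Sum>a<N. q a * ln (q a)) + ln (real N)"
    using q_sum by (simp add: distrib_left sum.distrib flip: sum_distrib_right)
  finally show ?thesis unfolding eta_def by (simp add: sum_negf)
qed

lemma sum_eta_le_doubly_substochastic:
  fixes w :: "'i \<Rightarrow> nat \<Rightarrow> real" and l :: "nat \<Rightarrow> real"
  assumes I: "finite I" and w0: "\<And>i k. w i k \<ge> 0"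
    and rows: "\<And>i. i \<in> I \<Longrightarrow> (\<Sum>k<n. w i k) = 1"
    and cols: "\<And>k. k < n \<Longrightarrow> (\<Sum>i\<in>I. w i k) \<le> 1"
    and l0: "\<And>k. k < n \<Longrightarrow> l k \<ge> 0"
    and mass: "(\<Sum>i\<in>I. \<Sum>k<n. w i k * l k) = (\<Sum>k<n. l k)"
  shows "(\<Sum>k<n. eta (l k)) \<le> (\<Sum>i\<in>I. eta (\<Sum>k<n. w i k * l k))"
proof -
  define s where "s k = (\<Sum>i\<in>I. w i k)" for k
  \<comment> \<open>Conservation of mass forces every column carrying weight to be stochastic.\<close>
  have "(\<Sum>k<n. l k * (1 - s k)) = 0"
    using mass unfolding s_def
    by (simp add: right_diff_distrib sum_subtractf sum_distrib_left sum.swap[of _ I] ac_simps)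
  moreover have "\<forall>k\<in>{..<n}. l k * (1 - s k) \<ge> 0" using l0 cols unfolding s_def by auto
  ultimately have "\<forall>k\<in>{..<n}. l k * (1 - s k) = 0"
    using sum_nonneg_eq_0_iff[of "{..<n}" "\<lambda>k. l k * (1 - s k)"] by auto
  then have "(\<Sum>k<n. eta (l k)) = (\<Sum>k<n. s k * eta (l k))"
    unfolding eta_def by (intro sum.cong refl) auto
  also have "\<dots> = (\<Sum>i\<in>I. \<Sum>k<n. w i k * eta (l k))"
    unfolding s_def by (simp add: sum.swap[of _ I] sum_distrib_right)
  also have "\<dots> \<le> (\<Sum>i\<in>I. eta (\<Sum>k<n. w i k * l k))"
    using w0 l0 rows by (intro sum_mono sum_weighted_eta_le) auto
  finally show ?thesis .
qed

section \<open>Von Neumann entropy\<close>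

lemma mset_eq_if_linear_factors_eq:
  fixes xs ys :: "complex list"
  assumes "(\<Prod>a\<leftarrow>xs. [:- a, 1:]) = (\<Prod>a\<leftarrow>ys. [:- a, 1:])"
  shows "mset xs = mset ys"
  using assms
proof (induction xs arbitrary: ys)
  case Nil
  show ?case
  proof (cases ys)
    case (Cons y ys')
    have "poly (\<Prod>a\<leftarrow>ys. [:- a, 1:]) y = 0" unfolding Cons by simp
    then show ?thesis using Nil by simp
  qed simp
next
  case (Cons x xs ys)
  have "poly (\<Prod>a\<leftarrow>ys. [:- a, 1:]) x = 0" using Cons.prems[symmetric] by simp
  then have "0 \<in> set (map (\<lambda>p. poly p x) (map (\<lambda>a. [:- a, 1:]) ys))"
    unfolding poly_prod_list prod_list_zero_iff[symmetric] by simp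
  then have xy: "x \<in> set ys" by auto
  have "[:- x, 1:] * (\<Prod>a\<leftarrow>xs. [:- a, 1:]) = [:- x, 1:] * (\<Prod>a\<leftarrow>remove1 x ys. [:- a, 1:])"
    using Cons.prems prod_list_map_remove1[OF xy, of "\<lambda>a. [:- a, 1:]"] by simp
  then have "(\<Prod>a\<leftarrow>xs. [:- a, 1:]) = (\<Prod>a\<leftarrow>remove1 x ys. [:- a, 1:])"
    by (subst (asm) mult_left_cancel) auto
  from Cons.IH[OF this] have "mset xs = mset (remove1 x ys)" .
  then show ?case using xy by (simp add: mset_remove1)
qed

lemma vn_entropy_unitary_diag:
  assumes U: "unitary n U"
  shows "vn_entropy (U * real_diag_mat n l * mat_adjoint U) = (\<Sum>k<n. eta (l k))"
proof -
  let ?A = "U * real_diag_mat n l * mat_adjoint U" and ?es = "map (\<lambda>i. complex_of_real (l i)) [0..<n]"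
  have Uc: "U \<in> carrier_mat n n" and U1: "mat_adjoint U * U = 1\<^sub>m n" and U2: "U * mat_adjoint U = 1\<^sub>m n"
    using U unfolding unitary_def by auto
  have Ac: "?A \<in> carrier_mat n n"
    using mult_carrier_mat[OF mult_carrier_mat[OF Uc real_diag_mat_carrier] mat_adjoint_carrier[OF Uc]] .
  have "similar_mat_wit ?A (real_diag_mat n l) U (mat_adjoint U)"
    unfolding similar_mat_wit_def Let_def using Ac Uc U1 U2 by simp
  then have "char_poly ?A = char_poly (real_diag_mat n l)"
    by (intro char_poly_similar) (auto simp: similar_mat_def)
  also have "\<dots> = (\<Prod>a\<leftarrow>diag_mat (real_diag_mat n l). [:- a, 1:])"
    by (intro char_poly_upper_triangular[of _ n]) (auto simp: upper_triangular_def real_diag_mat_def)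
  also have "diag_mat (real_diag_mat n l) = ?es"
    unfolding diag_mat_def real_diag_mat_def by auto
  finally have cp: "char_poly ?A = (\<Prod>a\<leftarrow>?es. [:- a, 1:])" .
  then have "char_poly ?A = (\<Prod>a\<leftarrow>eigvals_list ?A. [:- a, 1:])"
    unfolding eigvals_list_def by (rule someI)
  then have "mset (eigvals_list ?A) = mset ?es"
    using cp by (intro mset_eq_if_linear_factors_eq) simp
  then have "mset (map (\<lambda>e. Re e * ln (Re e)) (eigvals_list ?A)) = mset (map (\<lambda>e. Re e * ln (Re e)) ?es)"
    unfolding mset_map by (rule arg_cong)
  then have "vn_entropy ?A = - sum_list (map (\<lambda>e. Re e * ln (Re e)) ?es)"
    unfolding vn_entropy_def by (simp only: sum_mset_sum_list[symmetric])
  also have "\<dots> = (\<Sum>k<n. eta (l k))"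
    by (simp add: eta_def interv_sum_list_conv_sum_set_nat atLeast0LessThan sum_negf)
  finally show ?thesis .
qed

lemma bessel_inequality:
  fixes u :: "'i \<Rightarrow> nat \<Rightarrow> complex" and z :: "nat \<Rightarrow> complex"
  assumes I: "finite I"
    and orth: "\<And>i j. i \<in> I \<Longrightarrow> j \<in> I \<Longrightarrow> (\<Sum>x<n. cnj (u i x) * u j x) = (if i = j then 1 else 0)"
  shows "(\<Sum>i\<in>I. (cmod (\<Sum>x<n. cnj (u i x) * z x))\<^sup>2) \<le> (\<Sum>x<n. (cmod (z x))\<^sup>2)"
proof -
  define c where "c i = (\<Sum>x<n. cnj (u i x) * z x)" for i
  define t where "t x = (\<Sum>i\<in>I. c i * u i x)" for x
  define r where "r x = z x - t x" for x
  have zt: "(\<Sum>x<n. z x * cnj (t x)) = (\<Sum>i\<in>I. c i * cnj (c i))"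
  proof -
    have "(\<Sum>x<n. z x * cnj (t x)) = (\<Sum>x<n. \<Sum>i\<in>I. cnj (c i) * (cnj (u i x) * z x))"
      unfolding t_def by (simp add: cnj_sum sum_distrib_left ac_simps)
    also have "\<dots> = (\<Sum>i\<in>I. cnj (c i) * c i)"
      unfolding c_def by (subst sum.swap) (simp add: sum_distrib_left)
    finally show ?thesis by (simp add: ac_simps)
  qed
  have tz: "(\<Sum>x<n. t x * cnj (z x)) = (\<Sum>i\<in>I. c i * cnj (c i))"
  proof -
    have "(\<Sum>x<n. t x * cnj (z x)) = cnj (\<Sum>x<n. z x * cnj (t x))"
      by (simp add: cnj_sum ac_simps)
    also have "\<dots> = (\<Sum>i\<in>I. c i * cnj (c i))" unfolding zt by (simp add: cnj_sum ac_simps)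
    finally show ?thesis .
  qed
  have tt: "(\<Sum>x<n. t x * cnj (t x)) = (\<Sum>i\<in>I. c i * cnj (c i))"
  proof -
    have "(\<Sum>x<n. t x * cnj (t x)) = (\<Sum>x<n. \<Sum>j\<in>I. \<Sum>i\<in>I. c i * cnj (c j) * (cnj (u j x) * u i x))"
      unfolding t_def by (simp add: cnj_sum sum_distrib_left sum_distrib_right ac_simps)
    also have "\<dots> = (\<Sum>j\<in>I. \<Sum>i\<in>I. \<Sum>x<n. c i * cnj (c j) * (cnj (u j x) * u i x))"
      by (subst sum.swap, subst (2) sum.swap, rule refl)
    also have "\<dots> = (\<Sum>j\<in>I. \<Sum>i\<in>I. c i * cnj (c j) * (if j = i then 1 else 0))"
      by (intro sum.cong refl) (simp add: orth flip: sum_distrib_left)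
    also have "\<dots> = (\<Sum>i\<in>I. c i * cnj (c i))"
      using I by (simp add: if_distrib cong: if_cong)
    finally show ?thesis .
  qed
  \<comment> \<open>The residual r is orthogonal to the family, so its squared norm is the defect in the inequality.\<close>
  have "(\<Sum>x<n. r x * cnj (r x)) = (\<Sum>x<n. z x * cnj (z x) - z x * cnj (t x) - t x * cnj (z x) + t x * cnj (t x))"
    unfolding r_def by (intro sum.cong refl) (simp add: algebra_simps)
  also have "\<dots> = (\<Sum>x<n. z x * cnj (z x)) - (\<Sum>i\<in>I. c i * cnj (c i))"
    using zt tz tt by (simp add: sum.distrib sum_subtractf)
  finally have "complex_of_real (\<Sum>x<n. (cmod (r x))\<^sup>2) =
     complex_of_real (\<Sum>x<n. (cmod (z x))\<^sup>2) - complex_of_real (\<Sum>i\<in>I. (cmod (c i))\<^sup>2)"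
    by (simp only: sum_mult_cnj_eq_norm)
  then have "(\<Sum>x<n. (cmod (r x))\<^sup>2) = (\<Sum>x<n. (cmod (z x))\<^sup>2) - (\<Sum>i\<in>I. (cmod (c i))\<^sup>2)"
    by (metis of_real_diff of_real_eq_iff)
  moreover have "(\<Sum>x<n. (cmod (r x))\<^sup>2) \<ge> 0" by (intro sum_nonneg) auto
  ultimately show ?thesis unfolding c_def by linarith
qed

definition quad_form :: "nat \<Rightarrow> complex mat \<Rightarrow> (nat \<Rightarrow> complex) \<Rightarrow> complex" where
  "quad_form n B v = (\<Sum>x<n. \<Sum>y<n. cnj (v x) * B $$ (x,y) * v y)"

definition trace :: "nat \<Rightarrow> complex mat \<Rightarrow> complex" where
  "trace n B = (\<Sum>i<n. B $$ (i,i))"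

definition psd :: "nat \<Rightarrow> complex mat \<Rightarrow> bool" where
  "psd n B \<longleftrightarrow> hermitian n B \<and> (\<forall>v. Re (quad_form n B v) \<ge> 0)"

lemma density_op_iff_psd: "density_op n B \<longleftrightarrow> psd n B \<and> trace n B = 1"
  unfolding density_op_def psd_def hermitian_iff_entries quad_form_def trace_def by blast

lemma sum_swap3: "(\<Sum>x\<in>X. \<Sum>y\<in>Y. \<Sum>k\<in>K. F x y k) = (\<Sum>k\<in>K. \<Sum>x\<in>X. \<Sum>y\<in>Y. F x y k)"
  by (subst sum.swap) (simp only: sum.swap[of _ Y])

lemma sum_sum_mult_const:
  "(\<Sum>x\<in>X. \<Sum>y\<in>Y. (c :: 'a :: comm_ring) * (f x * g y)) = c * ((\<Sum>x\<in>X. f x) * (\<Sum>y\<in>Y. g y))"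
  by (subst sum_product) (simp only: sum_distrib_left)

lemma quad_form_mult_real_diag_adjoint:
  assumes N: "N \<in> carrier_mat a c"
  shows "quad_form a (N * real_diag_mat c l * mat_adjoint N) v
    = complex_of_real (\<Sum>k<c. l k * (cmod (\<Sum>x<a. cnj (v x) * N $$ (x,k)))\<^sup>2)"
proof -
  define g where "g k = (\<Sum>x<a. cnj (v x) * N $$ (x,k))" for k
  have "quad_form a (N * real_diag_mat c l * mat_adjoint N) v
      = (\<Sum>x<a. \<Sum>y<a. \<Sum>k<c. complex_of_real (l k) * ((cnj (v x) * N $$ (x,k)) * cnj (cnj (v y) * N $$ (y,k))))"
    unfolding quad_form_def
    by (intro sum.cong refl) (simp add: index_mult_real_diag_adjoint[OF N] sum_distrib_left sum_distrib_right ac_simps)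
  also have "\<dots> = (\<Sum>k<c. \<Sum>x<a. \<Sum>y<a. complex_of_real (l k) * ((cnj (v x) * N $$ (x,k)) * cnj (cnj (v y) * N $$ (y,k))))"
    by (rule sum_swap3)
  also have "\<dots> = (\<Sum>k<c. complex_of_real (l k) * (g k * cnj (g k)))"
    unfolding g_def by (intro sum.cong refl) (simp only: sum_sum_mult_const cnj_sum)
  also have "\<dots> = complex_of_real (\<Sum>k<c. l k * (cmod (g k))\<^sup>2)"
    by (simp only: of_real_sum of_real_mult complex_norm_square)
  finally show ?thesis unfolding g_def .
qed

lemma quad_form_unitary_diag_col:
  assumes U: "unitary n U" and k: "k < n"
  shows "quad_form n (U * real_diag_mat n l * mat_adjoint U) (\<lambda>x. U $$ (x,k)) = complex_of_real (l k)"
proof -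
  have Uc: "U \<in> carrier_mat n n" using U unfolding unitary_def by auto
  have "(\<Sum>j<n. l j * (cmod (\<Sum>x<n. cnj (U $$ (x,k)) * U $$ (x,j)))\<^sup>2) = (\<Sum>j<n. if j = k then l j else 0)"
    by (intro sum.cong refl) (simp add: unitary_cols_orthonormal[OF U k])
  then show ?thesis unfolding quad_form_mult_real_diag_adjoint[OF Uc] using k by simp
qed

lemma trace_unitary_diag:
  assumes U: "unitary n U"
  shows "trace n (U * real_diag_mat n l * mat_adjoint U) = complex_of_real (\<Sum>k<n. l k)"
proof -
  have Uc: "U \<in> carrier_mat n n" using U unfolding unitary_def by auto
  have "trace n (U * real_diag_mat n l * mat_adjoint U) = (\<Sum>i<n. \<Sum>k<n. U $$ (i,k) * l k * cnj (U $$ (i,k)))"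
    unfolding trace_def by (intro sum.cong refl) (simp add: index_mult_real_diag_adjoint[OF Uc])
  also have "\<dots> = (\<Sum>k<n. complex_of_real (l k) * (\<Sum>i<n. cnj (U $$ (i,k)) * U $$ (i,k)))"
    by (subst sum.swap) (simp add: sum_distrib_left ac_simps)
  also have "\<dots> = (\<Sum>k<n. complex_of_real (l k))"
    by (intro sum.cong refl) (simp add: unitary_cols_orthonormal[OF U])
  finally show ?thesis by simp
qed

lemma psd_spectral:
  assumes "psd n B"
  obtains U l where "unitary n U" "B = U * real_diag_mat n l * mat_adjoint U" "\<And>k. k < n \<Longrightarrow> l k \<ge> 0"
    "trace n B = complex_of_real (\<Sum>k<n. l k)"
proof -
  have h: "hermitian n B" and pos: "\<And>v. Re (quad_form n B v) \<ge> 0" using assms unfolding psd_def by auto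
  obtain U l where U: "unitary n U" and B: "B = U * real_diag_mat n l * mat_adjoint U"
    using hermitian_spectral[OF h] by blast
  have "l k \<ge> 0" if "k < n" for k
    using pos[of "\<lambda>x. U $$ (x,k)"] unfolding B quad_form_unitary_diag_col[OF U that] by simp
  then show ?thesis using that U B trace_unitary_diag[OF U] by blast
qed

lemma sum_norm_sq_unitary_coeffs:
  assumes U: "unitary n U"
  shows "(\<Sum>k<n. (cmod (\<Sum>x<n. cnj (v x) * U $$ (x,k)))\<^sup>2) = (\<Sum>x<n. (cmod (v x))\<^sup>2)"
proof -
  have Uc: "U \<in> carrier_mat n n" using U unfolding unitary_def by auto
  have one: "U * real_diag_mat n (\<lambda>_. 1) * mat_adjoint U = 1\<^sub>m n"
    using right_mult_one_mat[OF Uc] U unfolding real_diag_mat_one unitary_def by simp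
  have "quad_form n (1\<^sub>m n) v = (\<Sum>x<n. \<Sum>y<n. if x = y then cnj (v x) * v y else 0)"
    unfolding quad_form_def by (intro sum.cong refl) auto
  also have "\<dots> = (\<Sum>x<n. v x * cnj (v x))" by (simp add: mult.commute)
  finally have "complex_of_real (\<Sum>x<n. (cmod (v x))\<^sup>2)
      = complex_of_real (\<Sum>k<n. 1 * (cmod (\<Sum>x<n. cnj (v x) * U $$ (x,k)))\<^sup>2)"
    using quad_form_mult_real_diag_adjoint[OF Uc, of "\<lambda>_. 1" v] unfolding one sum_mult_cnj_eq_norm by simp
  then show ?thesis unfolding of_real_eq_iff by simp
qed

text \<open>The diagonal of a state in any orthonormal family carrying all of its weight is more
  mixed than its spectrum: the overlaps between the family and an eigenbasis form a doubly
  substochastic matrix.\<close>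

lemma vn_entropy_le_orthonormal_family:
  fixes u :: "'i \<Rightarrow> nat \<Rightarrow> complex"
  assumes B: "psd n B" and trB: "trace n B = 1" and I: "finite I"
    and orth: "\<And>i j. i \<in> I \<Longrightarrow> j \<in> I \<Longrightarrow> (\<Sum>x<n. cnj (u i x) * u j x) = (if i = j then 1 else 0)"
    and mass: "(\<Sum>i\<in>I. Re (quad_form n B (u i))) = 1"
  shows "vn_entropy B \<le> (\<Sum>i\<in>I. eta (Re (quad_form n B (u i))))"
proof -
  obtain U l where U: "unitary n U" and B_eq: "B = U * real_diag_mat n l * mat_adjoint U"
    and l0: "\<And>k. k < n \<Longrightarrow> l k \<ge> 0" and trace_l: "trace n B = complex_of_real (\<Sum>k<n. l k)"
    using psd_spectral[OF B] by blast
  have Uc: "U \<in> carrier_mat n n" using U unfolding unitary_def by auto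
  define w where "w i k = (cmod (\<Sum>x<n. cnj (u i x) * U $$ (x,k)))\<^sup>2" for i k
  have diag: "Re (quad_form n B (u i)) = (\<Sum>k<n. w i k * l k)" for i
    unfolding B_eq quad_form_mult_real_diag_adjoint[OF Uc] w_def by (simp add: mult.commute)
  have rows: "(\<Sum>k<n. w i k) = 1" if "i \<in> I" for i
  proof -
    have "(\<Sum>x<n. u i x * cnj (u i x)) = 1" using orth[OF that that] by (simp add: mult.commute)
    then have "complex_of_real (\<Sum>x<n. (cmod (u i x))\<^sup>2) = 1" unfolding sum_mult_cnj_eq_norm .
    then show ?thesis unfolding w_def sum_norm_sq_unitary_coeffs[OF U] of_real_eq_1_iff .
  qed
  have cols: "(\<Sum>i\<in>I. w i k) \<le> 1" if "k < n" for k
    using bessel_inequality[OF I orth, of "\<lambda>x. U $$ (x,k)"] unfolding w_def unitary_col_norm[OF U that] .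
  have "(\<Sum>k<n. l k) = 1" using trace_l trB by (metis of_real_eq_1_iff)
  then have mass': "(\<Sum>i\<in>I. \<Sum>k<n. w i k * l k) = (\<Sum>k<n. l k)" using mass unfolding diag by simp
  have "vn_entropy B = (\<Sum>k<n. eta (l k))" unfolding B_eq by (rule vn_entropy_unitary_diag[OF U])
  also have "\<dots> \<le> (\<Sum>i\<in>I. eta (\<Sum>k<n. w i k * l k))"
    by (rule sum_eta_le_doubly_substochastic[OF I _ rows cols l0 mass']) (simp add: w_def)
  finally show ?thesis unfolding diag .
qed

lemma vn_entropy_le_ln_dim:
  assumes B: "psd n B" and trB: "trace n B = 1"
  shows "vn_entropy B \<le> ln (real n)"
proof -
  obtain U l where U: "unitary n U" and B_eq: "B = U * real_diag_mat n l * mat_adjoint U"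
    and l0: "\<And>k. k < n \<Longrightarrow> l k \<ge> 0" and trace_l: "trace n B = complex_of_real (\<Sum>k<n. l k)"
    using psd_spectral[OF B] by blast
  have sum_l: "(\<Sum>k<n. l k) = 1" using trace_l trB by (metis of_real_eq_1_iff)
  have "vn_entropy B = (\<Sum>k<n. eta (l k))" unfolding B_eq by (rule vn_entropy_unitary_diag[OF U])
  also have "\<dots> \<le> ln (real n)" using l0 sum_l by (rule sum_eta_le_ln)
  finally show ?thesis .
qed

lemma quad_form_gram:
  assumes N: "N \<in> carrier_mat a c"
  shows "quad_form a (N * mat_adjoint N) v = complex_of_real (\<Sum>k<c. (cmod (\<Sum>x<a. cnj (v x) * N $$ (x,k)))\<^sup>2)"
  using quad_form_mult_real_diag_adjoint[OF N, of "\<lambda>_. 1" v] N by (simp add: real_diag_mat_one)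

lemma psd_gram:
  assumes N: "N \<in> carrier_mat a c"
  shows "psd a (N * mat_adjoint N)"
proof -
  have "mat_adjoint (N * mat_adjoint N) = N * mat_adjoint N"
    using N by (simp add: mat_adjoint_mult[of _ a c _ a])
  then have "hermitian a (N * mat_adjoint N)" using N unfolding hermitian_def by simp
  moreover have "Re (quad_form a (N * mat_adjoint N) v) \<ge> 0" for v
    unfolding quad_form_gram[OF N] by (simp add: sum_nonneg)
  ultimately show ?thesis unfolding psd_def by blast
qed

lemma trace_gram_swap:
  assumes N: "N \<in> carrier_mat a c"
  shows "trace a (N * mat_adjoint N) = trace c (mat_adjoint N * N)"
proof -
  have "trace a (N * mat_adjoint N) = (\<Sum>i<a. \<Sum>k<c. N $$ (i,k) * cnj (N $$ (i,k)))"
    unfolding trace_def by (intro sum.cong refl) (simp add: index_mult_adjoint[OF N N])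
  also have "\<dots> = (\<Sum>k<c. \<Sum>i<a. cnj (N $$ (i,k)) * N $$ (i,k))"
    by (subst sum.swap) (simp add: ac_simps)
  also have "\<dots> = trace c (mat_adjoint N * N)"
    unfolding trace_def by (intro sum.cong refl) (simp add: index_adjoint_mult[OF N N])
  finally show ?thesis .
qed

lemma gram_mult_unitary:
  assumes N: "N \<in> carrier_mat a c" and V: "unitary c V"
    and gram: "mat_adjoint N * N = V * real_diag_mat c \<mu> * mat_adjoint V"
  shows "mat_adjoint (N * V) * N = real_diag_mat c \<mu> * mat_adjoint V"
    and "mat_adjoint (N * V) * (N * V) = real_diag_mat c \<mu>"
proof -
  have Vc: "V \<in> carrier_mat c c" and aV: "mat_adjoint V \<in> carrier_mat c c"
    and V1: "mat_adjoint V * V = 1\<^sub>m c" using V unfolding unitary_def by auto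
  have aN: "mat_adjoint N \<in> carrier_mat c a" using N by simp
  have D: "real_diag_mat c \<mu> \<in> carrier_mat c c" by simp
  have "mat_adjoint (N * V) * N = mat_adjoint V * mat_adjoint N * N"
    by (simp add: mat_adjoint_mult[OF N Vc])
  also have "\<dots> = mat_adjoint V * (V * (real_diag_mat c \<mu> * mat_adjoint V))"
    unfolding assoc_mult_mat[OF aV aN N] gram using assoc_mult_mat[OF Vc D aV] by simp
  also have "\<dots> = (mat_adjoint V * V) * (real_diag_mat c \<mu> * mat_adjoint V)"
    using aV Vc D by (intro assoc_mult_mat[symmetric]) auto
  finally show cross: "mat_adjoint (N * V) * N = real_diag_mat c \<mu> * mat_adjoint V"
    unfolding V1 using D aV by simp
  have "mat_adjoint (N * V) * (N * V) = (mat_adjoint (N * V) * N) * V"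
    using N Vc by (intro assoc_mult_mat[symmetric]) auto
  then show "mat_adjoint (N * V) * (N * V) = real_diag_mat c \<mu>"
    unfolding cross using D aV Vc V1 by (simp add: assoc_mult_mat[of _ c c _ c _ c])
qed

text \<open>The two reduced states of a pure state are the Gram matrices N N^* and N^* N. If
  N^* N = V diag(\<mu>) V^*, the nonzero columns of N V, normalised, form an orthonormal family on
  which N N^* has diagonal \<mu>.\<close>

lemma vn_entropy_gram_le:
  assumes N: "N \<in> carrier_mat a c" and t: "trace a (N * mat_adjoint N) = 1"
  shows "vn_entropy (N * mat_adjoint N) \<le> vn_entropy (mat_adjoint N * N)"
proof -
  have aN: "mat_adjoint N \<in> carrier_mat c a" using N by simp
  obtain V \<mu> where V: "unitary c V" and gram: "mat_adjoint N * N = V * real_diag_mat c \<mu> * mat_adjoint V"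
    and \<mu>0: "\<And>k. k < c \<Longrightarrow> \<mu> k \<ge> 0" and trace_\<mu>: "trace c (mat_adjoint N * N) = complex_of_real (\<Sum>k<c. \<mu> k)"
    using psd_spectral[OF psd_gram[OF aN]] by auto
  have sum_\<mu>: "(\<Sum>k<c. \<mu> k) = 1" using trace_\<mu> t trace_gram_swap[OF N] by (metis of_real_eq_1_iff)
  have Vc: "V \<in> carrier_mat c c" using V unfolding unitary_def by simp
  define K where "K = N * V"
  have Kc: "K \<in> carrier_mat a c" using N V unfolding K_def unitary_def by auto
  note cross = gram_mult_unitary(1)[OF N V gram, folded K_def]
  note K_gram = gram_mult_unitary(2)[OF N V gram, folded K_def]
  define I where "I = {k. k < c \<and> \<mu> k > 0}"
  define u where "u k x = K $$ (x,k) * complex_of_real (1 / sqrt (\<mu> k))" for k x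
  have orth: "(\<Sum>x<a. cnj (u k x) * u j x) = (if k = j then 1 else 0)" if "k \<in> I" "j \<in> I" for k j
  proof -
    have kj: "k < c" "j < c" "\<mu> k > 0" "\<mu> j > 0" using that unfolding I_def by auto
    have "(\<Sum>x<a. cnj (K $$ (x,k)) * K $$ (x,j)) = real_diag_mat c \<mu> $$ (k,j)"
      unfolding K_gram[symmetric] by (rule index_adjoint_mult[OF Kc Kc kj(1,2), symmetric])
    then have "(\<Sum>x<a. cnj (K $$ (x,k)) * K $$ (x,j)) = (if k = j then complex_of_real (\<mu> k) else 0)"
      using kj by (simp add: real_diag_mat_def)
    moreover have "(\<Sum>x<a. cnj (u k x) * u j x)
        = (\<Sum>x<a. cnj (K $$ (x,k)) * K $$ (x,j)) * complex_of_real (1 / sqrt (\<mu> k) * (1 / sqrt (\<mu> j)))"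
      unfolding u_def sum_distrib_right by (intro sum.cong refl) simp
    ultimately show ?thesis using kj by (auto simp: real_sqrt_mult[symmetric] simp flip: of_real_mult)
  qed
  have diag: "Re (quad_form a (N * mat_adjoint N) (u k)) = \<mu> k" if "k \<in> I" for k
  proof -
    have k: "k < c" and \<mu>k: "\<mu> k > 0" using that unfolding I_def by auto
    have row: "(\<Sum>x<a. cnj (u k x) * N $$ (x,y)) = complex_of_real (sqrt (\<mu> k)) * cnj (V $$ (y,k))"
      if "y < c" for y
    proof -
      have "(\<Sum>x<a. cnj (K $$ (x,k)) * N $$ (x,y)) = (real_diag_mat c \<mu> * mat_adjoint V) $$ (k,y)"
        unfolding cross[symmetric] by (rule index_adjoint_mult[OF Kc N k that, symmetric])
      also have "\<dots> = (\<Sum>l<c. real_diag_mat c \<mu> $$ (k,l) * mat_adjoint V $$ (l,y))"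
        by (rule index_mult_mat_sum[OF real_diag_mat_carrier mat_adjoint_carrier[OF Vc] k that])
      also have "\<dots> = (\<Sum>l<c. if l = k then \<mu> k * cnj (V $$ (y,k)) else 0)"
        using Vc k that by (intro sum.cong refl) (auto simp: real_diag_mat_def)
      also have "\<dots> = \<mu> k * cnj (V $$ (y,k))" using k by simp
      finally have "(\<Sum>x<a. cnj (u k x) * N $$ (x,y)) = complex_of_real (\<mu> k * (1 / sqrt (\<mu> k))) * cnj (V $$ (y,k))"
        unfolding u_def by (simp add: sum_divide_distrib[symmetric] ac_simps)
      moreover have "\<mu> k * (1 / sqrt (\<mu> k)) = sqrt (\<mu> k)" using \<mu>k by (simp add: real_div_sqrt)
      ultimately show ?thesis by (simp only:)
    qed
    have "(\<Sum>y<c. (cmod (\<Sum>x<a. cnj (u k x) * N $$ (x,y)))\<^sup>2) = \<mu> k * (\<Sum>y<c. (cmod (V $$ (y,k)))\<^sup>2)"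
      using \<mu>k by (simp add: row norm_mult power_mult_distrib sum_distrib_left)
    also have "\<dots> = \<mu> k" unfolding unitary_col_norm[OF V k] by simp
    finally show ?thesis unfolding quad_form_gram[OF N] by simp
  qed
  have "(\<Sum>k\<in>I. \<mu> k) = (\<Sum>k<c. \<mu> k)"
    using \<mu>0 by (intro sum.mono_neutral_left) (auto simp: I_def less_le)
  then have mass: "(\<Sum>k\<in>I. Re (quad_form a (N * mat_adjoint N) (u k))) = 1"
    using sum_\<mu> diag by simp
  have "vn_entropy (N * mat_adjoint N) \<le> (\<Sum>k\<in>I. eta (Re (quad_form a (N * mat_adjoint N) (u k))))"
    using vn_entropy_le_orthonormal_family[OF psd_gram[OF N] t _ orth mass] by (simp add: I_def)
  also have "\<dots> = (\<Sum>k<c. eta (\<mu> k))"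
    using \<mu>0 by (simp add: diag, intro sum.mono_neutral_left) (auto simp: I_def eta_def less_le)
  also have "\<dots> = vn_entropy (mat_adjoint N * N)"
    unfolding gram by (rule vn_entropy_unitary_diag[OF V, symmetric])
  finally show ?thesis .
qed

lemma vn_entropy_gram_eq:
  assumes N: "N \<in> carrier_mat a c" and t: "trace a (N * mat_adjoint N) = 1"
  shows "vn_entropy (N * mat_adjoint N) = vn_entropy (mat_adjoint N * N)"
proof -
  have aN: "mat_adjoint N \<in> carrier_mat c a" using N by simp
  have "trace c (mat_adjoint N * mat_adjoint (mat_adjoint N)) = 1" using trace_gram_swap[OF N] t by simp
  then show ?thesis using vn_entropy_gram_le[OF N t] vn_entropy_gram_le[OF aN] by simp
qed

section \<open>Index encoding and partial traces\<close>

definition digit :: "nat \<Rightarrow> nat \<Rightarrow> nat \<Rightarrow> nat" where "digit d t i = i div d ^ t mod d"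

text \<open>sub_index d L i collects the digits of i at the positions listed in L; it inverts place d L.\<close>

definition sub_index :: "nat \<Rightarrow> nat list \<Rightarrow> nat \<Rightarrow> nat" where
  "sub_index d L i = (\<Sum>p<length L. digit d (L ! p) i * d ^ p)"

lemma digit_less: "d > 0 \<Longrightarrow> digit d t i < d" unfolding digit_def by simp

lemma sum_digits_less:
  fixes d :: nat and f :: "nat \<Rightarrow> nat"
  assumes "d > 0" "\<And>t. t < m \<Longrightarrow> f t < d"
  shows "(\<Sum>t<m. f t * d ^ t) < d ^ m"
  using assms(2)
proof (induction m)
  case 0 then show ?case by simp
next
  case (Suc m)
  have "(\<Sum>t<m. f t * d ^ t) < d ^ m" using Suc by auto
  moreover have "f m \<le> d - 1" using Suc.prems[of m] by auto
  then have "f m * d ^ m \<le> (d - 1) * d ^ m" by (intro mult_right_mono, auto)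
  ultimately have "(\<Sum>t<m. f t * d ^ t) + f m * d ^ m < d ^ m + (d - 1) * d ^ m" by linarith
  also have "d ^ m + (d - 1) * d ^ m = d ^ Suc m" using assms(1)
    by (cases d, auto simp: algebra_simps)
  finally show ?case by simp
qed

lemma digit_sum_digits:
  fixes f :: "nat \<Rightarrow> nat"
  assumes d: "d > 0" and f: "\<And>t. t < m \<Longrightarrow> f t < d"
  shows "digit d t (\<Sum>s<m. f s * d ^ s) = (if t < m then f t else 0)"
  using f
proof (induction m arbitrary: t)
  case 0 then show ?case by (simp add: digit_def)
next
  case (Suc m)
  define S where "S = (\<Sum>s<m. f s * d ^ s)"
  have S: "S < d ^ m" unfolding S_def using sum_digits_less[OF d, of m f] Suc.prems by auto
  have fm: "f m < d" using Suc.prems by auto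
  have eq: "(\<Sum>s<Suc m. f s * d ^ s) = S + f m * d ^ m" unfolding S_def by simp
  show ?case
  proof (cases "t < m")
    case True
    have dm: "d ^ m = d ^ t * d ^ (m - t)" using True by (simp flip: power_add)
    have "S + f m * d ^ m = S + (f m * d ^ (m - t)) * d ^ t" unfolding dm by (simp add: ac_simps)
    then have "(S + f m * d ^ m) div d ^ t = (S + (f m * d ^ (m - t)) * d ^ t) div d ^ t"
      by (rule arg_cong[where f = "\<lambda>x. x div d ^ t"])
    also have "\<dots> = S div d ^ t + f m * d ^ (m - t)"
      using d by simp
    also have "\<dots> mod d = S div d ^ t mod d"
    proof -
      have "d ^ (m - t) = d * d ^ (m - t - 1)" using True by (cases "m - t", auto)
      then have "S div d ^ t + f m * d ^ (m - t) = S div d ^ t + (f m * d ^ (m - t - 1)) * d" by simp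
      then show ?thesis by (metis mod_mult_self1)
    qed
    finally have "digit d t (S + f m * d ^ m) = digit d t S" unfolding digit_def .
    then show ?thesis unfolding eq using Suc.IH[of t] Suc.prems True unfolding S_def by auto
  next
    case False
    show ?thesis
    proof (cases "t = m")
      case True
      have "(S + f m * d ^ m) div d ^ m = f m" using S d by (simp add: div_add1_eq)
      then show ?thesis unfolding eq digit_def True using fm by simp
    next
      case False
      with \<open>\<not> t < m\<close> have tm: "t > m" by auto
      have "S + f m * d ^ m < d ^ Suc m" using sum_digits_less[OF d, of "Suc m" f] Suc.prems eq unfolding S_def by auto
      also have "\<dots> \<le> d ^ t" using tm d by (intro power_increasing, auto)
      finally show ?thesis unfolding eq digit_def using tm by simp
    qed
  qed
qed

lemma mod_power_eq_sum_digits: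
  assumes "d > 0"
  shows "i mod d ^ m = (\<Sum>t<m. digit d t i * d ^ t)"
proof (induction m)
  case 0 then show ?case by simp
next
  case (Suc m)
  have "i mod d ^ Suc m = i mod (d ^ m * d)" by (simp add: ac_simps)
  also have "\<dots> = d ^ m * (i div d ^ m mod d) + i mod d ^ m" by (rule mod_mult2_eq)
  finally show ?case using Suc by (simp add: digit_def ac_simps)
qed

lemma eq_sum_digits:
  assumes "d > 0" "i < d ^ m"
  shows "i = (\<Sum>t<m. digit d t i * d ^ t)"
  using mod_power_eq_sum_digits[OF assms(1), of i m] assms(2) by simp

lemma eq_if_digits_eq:
  assumes "d > 0" "i < d ^ m" "j < d ^ m" "\<And>t. t < m \<Longrightarrow> digit d t i = digit d t j"
  shows "i = j"
  using eq_sum_digits[OF assms(1,2)] eq_sum_digits[OF assms(1,3)] assms(4) by (metis (no_types, lifting) lessThan_iff sum.cong)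

lemma sub_index_less:
  assumes "d > 0"
  shows "sub_index d L i < d ^ length L"
  unfolding sub_index_def by (rule sum_digits_less[OF assms], rule digit_less[OF assms])

lemma digit_sub_index:
  assumes "d > 0" "q < length L"
  shows "digit d q (sub_index d L i) = digit d (L ! q) i"
  unfolding sub_index_def using digit_sum_digits[OF assms(1), of "length L" "\<lambda>p. digit d (L ! p) i" q] assms digit_less by auto

lemma sub_index_eq_iff:
  assumes "d > 0"
  shows "sub_index d L i = sub_index d L j \<longleftrightarrow> (\<forall>q<length L. digit d (L ! q) i = digit d (L ! q) j)"
proof
  assume "sub_index d L i = sub_index d L j"
  then show "\<forall>q<length L. digit d (L ! q) i = digit d (L ! q) j" using digit_sub_index[OF assms] by metis
next
  assume "\<forall>q<length L. digit d (L ! q) i = digit d (L ! q) j"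
  then show "sub_index d L i = sub_index d L j" unfolding sub_index_def by (intro sum.cong, auto)
qed

lemma sub_index_sub_index:
  assumes "d > 0" "\<forall>q \<in> set L. q < length L2"
  shows "sub_index d L (sub_index d L2 i) = sub_index d (map ((!) L2) L) i"
proof -
  have "sub_index d L (sub_index d L2 i) = (\<Sum>p<length L. digit d (L ! p) (sub_index d L2 i) * d ^ p)"
    by (simp only: sub_index_def[of d L])
  also have "\<dots> = (\<Sum>p<length L. digit d (L2 ! (L ! p)) i * d ^ p)"
    using assms by (intro sum.cong refl, auto simp: digit_sub_index)
  also have "\<dots> = sub_index d (map ((!) L2) L) i" unfolding sub_index_def by simp
  finally show ?thesis .
qed

definition list_pos :: "nat list \<Rightarrow> nat \<Rightarrow> nat" where
  "list_pos L t = inv_into {..<length L} ((!) L) t"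

lemma list_pos_nth: "distinct L \<Longrightarrow> q < length L \<Longrightarrow> list_pos L (L ! q) = q"
  unfolding list_pos_def by (rule inv_into_f_f, auto simp: inj_on_def nth_eq_iff_index_eq)

lemma nth_list_pos: "t \<in> set L \<Longrightarrow> L ! (list_pos L t) = t \<and> list_pos L t < length L"
  unfolding list_pos_def by (metis f_inv_into_f in_set_conv_nth inv_into_into lessThan_iff image_eqI)

lemma sum_nth_eq_sum_set:
  assumes "distinct L"
  shows "(\<Sum>p<length L. F p (L ! p)) = (\<Sum>t\<in>set L. F (list_pos L t) t)"
proof -
  have b: "bij_betw ((!) L) {..<length L} (set L)" using assms by (intro bij_betw_nth, auto)
  have "(\<Sum>t\<in>set L. F (list_pos L t) t) = (\<Sum>p<length L. F (list_pos L (L ! p)) (L ! p))"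
    by (rule sum.reindex_bij_betw[OF b, symmetric])
  also have "\<dots> = (\<Sum>p<length L. F p (L ! p))" using assms by (intro sum.cong refl, simp add: list_pos_nth)
  finally show ?thesis by simp
qed

lemma place_eq_sum_set: "distinct L \<Longrightarrow> place d L a = (\<Sum>t\<in>set L. digit d (list_pos L t) a * d ^ t)"
  unfolding place_def digit_def using sum_nth_eq_sum_set[of L "\<lambda>p t. a div d ^ p mod d * d ^ t"] by simp

abbreviation slist :: "nat set \<Rightarrow> nat list" where "slist X \<equiv> sorted_list_of_set X"

definition join_index :: "nat \<Rightarrow> nat \<Rightarrow> nat set \<Rightarrow> nat \<Rightarrow> nat \<Rightarrow> nat" where
  "join_index d m X a c = place d (slist X) a + place d (slist ({0..<m} - X)) c"

lemma card_compl: "X \<subseteq> {0..<m} \<Longrightarrow> card ({0..<m} - X) = m - card X"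
  by (simp add: card_Diff_subset finite_subset)

context
  fixes d m :: nat and X :: "nat set"
  assumes d: "d > 0" and X: "X \<subseteq> {0..<m}"
begin

private lemma finite_X: "finite X" using X finite_subset by blast

private lemma slist_X: "set (slist X) = X" "distinct (slist X)" "length (slist X) = card X"
  using finite_X by auto

private lemma slist_compl: "set (slist ({0..<m} - X)) = {0..<m} - X" "distinct (slist ({0..<m} - X))"
  "length (slist ({0..<m} - X)) = m - card X"
  using card_compl[OF X] by auto

definition join_digit :: "nat \<Rightarrow> nat \<Rightarrow> nat \<Rightarrow> nat" where
  "join_digit a c t = (if t \<in> X then digit d (list_pos (slist X) t) a else digit d (list_pos (slist ({0..<m} - X)) t) c)"

lemma join_index_eq_sum_digits: "join_index d m X a c = (\<Sum>t<m. join_digit a c t * d ^ t)"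
proof -
  have "join_index d m X a c = (\<Sum>t\<in>X. digit d (list_pos (slist X) t) a * d ^ t) +
     (\<Sum>t\<in>{0..<m} - X. digit d (list_pos (slist ({0..<m} - X)) t) c * d ^ t)"
    unfolding join_index_def using slist_X slist_compl by (simp add: place_eq_sum_set)
  also have "\<dots> = (\<Sum>t\<in>X. join_digit a c t * d ^ t) + (\<Sum>t\<in>{0..<m} - X. join_digit a c t * d ^ t)"
    unfolding join_digit_def by (intro arg_cong2[where f = "(+)"] sum.cong refl, auto)
  also have "\<dots> = (\<Sum>t\<in>X \<union> ({0..<m} - X). join_digit a c t * d ^ t)"
    by (rule sum.union_disjoint[symmetric], insert finite_X, auto)
  also have "X \<union> ({0..<m} - X) = {..<m}" using X by auto
  finally show ?thesis .
qed

lemma join_digit_less: "join_digit a c t < d" unfolding join_digit_def using digit_less[OF d] by auto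

lemma digit_join_index: "t < m \<Longrightarrow> digit d t (join_index d m X a c) = join_digit a c t"
  unfolding join_index_eq_sum_digits using digit_sum_digits[OF d, of m "join_digit a c" t] join_digit_less by auto

lemma join_index_less: "join_index d m X a c < d ^ m"
  unfolding join_index_eq_sum_digits by (rule sum_digits_less[OF d join_digit_less])

lemma sub_index_join_index_fst:
  assumes a: "a < d ^ card X"
  shows "sub_index d (slist X) (join_index d m X a c) = a"
proof -
  have "sub_index d (slist X) (join_index d m X a c) = (\<Sum>q<card X. digit d q a * d ^ q)"
    unfolding sub_index_def slist_X(3)
  proof (intro sum.cong refl)
    fix q assume q: "q \<in> {..<card X}"
    then have "slist X ! q \<in> X" using slist_X by (metis lessThan_iff nth_mem)
    moreover then have "slist X ! q < m" using X by auto
    ultimately show "digit d (slist X ! q) (join_index d m X a c) * d ^ q = digit d q a * d ^ q"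
      using q slist_X by (simp add: digit_join_index join_digit_def list_pos_nth)
  qed
  also have "\<dots> = a" using eq_sum_digits[OF d a] by simp
  finally show ?thesis .
qed

lemma sub_index_join_index_snd:
  assumes c: "c < d ^ (m - card X)"
  shows "sub_index d (slist ({0..<m} - X)) (join_index d m X a c) = c"
proof -
  have "sub_index d (slist ({0..<m} - X)) (join_index d m X a c) = (\<Sum>q<m - card X. digit d q c * d ^ q)"
    unfolding sub_index_def slist_compl(3)
  proof (intro sum.cong refl)
    fix q assume q: "q \<in> {..<m - card X}"
    then have "slist ({0..<m} - X) ! q \<in> {0..<m} - X" using slist_compl by (metis lessThan_iff nth_mem)
    then show "digit d (slist ({0..<m} - X) ! q) (join_index d m X a c) * d ^ q = digit d q c * d ^ q"
      using q slist_compl by (simp add: digit_join_index join_digit_def list_pos_nth)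
  qed
  also have "\<dots> = c" using eq_sum_digits[OF d c] by simp
  finally show ?thesis .
qed

lemma join_index_sub_index:
  assumes i: "i < d ^ m"
  shows "join_index d m X (sub_index d (slist X) i) (sub_index d (slist ({0..<m} - X)) i) = i"
proof (rule eq_if_digits_eq[OF d join_index_less i])
  fix t assume t: "t < m"
  show "digit d t (join_index d m X (sub_index d (slist X) i) (sub_index d (slist ({0..<m} - X)) i)) = digit d t i"
  proof (cases "t \<in> X")
    case True
    then have "slist X ! list_pos (slist X) t = t" "list_pos (slist X) t < length (slist X)" using nth_list_pos[of t "slist X"] slist_X by auto
    then show ?thesis using True t by (simp add: digit_join_index join_digit_def digit_sub_index[OF d])
  next
    case False
    then have tt: "t \<in> set (slist ({0..<m} - X))" using slist_compl t by auto
    then have "slist ({0..<m} - X) ! list_pos (slist ({0..<m} - X)) t = t" "list_pos (slist ({0..<m} - X)) t < length (slist ({0..<m} - X))"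
      using nth_list_pos[OF tt] by auto
    then show ?thesis using False t by (simp add: digit_join_index join_digit_def digit_sub_index[OF d])
  qed
qed

lemma bij_betw_split_index: "bij_betw (\<lambda>i. (sub_index d (slist X) i, sub_index d (slist ({0..<m} - X)) i)) {..<d ^ m}
     ({..<d ^ card X} \<times> {..<d ^ (m - card X)})"
proof (rule bij_betw_byWitness[where f' = "\<lambda>(a,c). join_index d m X a c"])
  show "\<forall>i\<in>{..<d ^ m}. (case (sub_index d (slist X) i, sub_index d (slist ({0..<m} - X)) i) of (a, c) \<Rightarrow> join_index d m X a c) = i"
    using join_index_sub_index by auto
  show "\<forall>ac\<in>{..<d ^ card X} \<times> {..<d ^ (m - card X)}.
     (sub_index d (slist X) (case ac of (a, c) \<Rightarrow> join_index d m X a c), sub_index d (slist ({0..<m} - X)) (case ac of (a, c) \<Rightarrow> join_index d m X a c)) = ac"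
    using sub_index_join_index_fst sub_index_join_index_snd by auto
  show "(\<lambda>i. (sub_index d (slist X) i, sub_index d (slist ({0..<m} - X)) i)) ` {..<d ^ m} \<subseteq> {..<d ^ card X} \<times> {..<d ^ (m - card X)}"
    using sub_index_less[OF d, of "slist X"] sub_index_less[OF d, of "slist ({0..<m} - X)"] slist_X slist_compl by auto
  show "(\<lambda>(a, c). join_index d m X a c) ` ({..<d ^ card X} \<times> {..<d ^ (m - card X)}) \<subseteq> {..<d ^ m}"
    using join_index_less by auto
qed

lemma sum_split_index: "(\<Sum>i<d ^ m. F (sub_index d (slist X) i) (sub_index d (slist ({0..<m} - X)) i)) =
    (\<Sum>a<d ^ card X. \<Sum>c<d ^ (m - card X). F a c)"
proof -
  have "(\<Sum>i<d ^ m. F (sub_index d (slist X) i) (sub_index d (slist ({0..<m} - X)) i)) =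
     (\<Sum>ac\<in>{..<d ^ card X} \<times> {..<d ^ (m - card X)}. case_prod F ac)"
    using sum.reindex_bij_betw[OF bij_betw_split_index, of "case_prod F"] by simp
  also have "\<dots> = (\<Sum>a<d ^ card X. \<Sum>c<d ^ (m - card X). F a c)"
    by (rule sum.cartesian_product[symmetric])
  finally show ?thesis .
qed

lemma index_ptrace:
  assumes "a < d ^ card X" "b < d ^ card X"
  shows "ptrace d m X \<rho> $$ (a,b) = (\<Sum>c<d ^ (m - card X). \<rho> $$ (join_index d m X a c, join_index d m X b c))"
  unfolding ptrace_def join_index_def Let_def using assms by simp

lemma ptrace_carrier: "ptrace d m X \<rho> \<in> carrier_mat (d ^ card X) (d ^ card X)"
  unfolding ptrace_def Let_def by simp

end

lemma sum_sum_split_index: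
  assumes d: "d > 0" and X: "X \<subseteq> {0..<m}"
  shows "(\<Sum>i<d ^ m. \<Sum>i'<d ^ m. F (sub_index d (slist X) i) (sub_index d (slist ({0..<m} - X)) i)
                                (sub_index d (slist X) i') (sub_index d (slist ({0..<m} - X)) i')) =
    (\<Sum>x<d ^ card X. \<Sum>y<d ^ (m - card X). \<Sum>x'<d ^ card X. \<Sum>y'<d ^ (m - card X). F x y x' y')"
proof -
  have "(\<Sum>i<d ^ m. \<Sum>i'<d ^ m. F (sub_index d (slist X) i) (sub_index d (slist ({0..<m} - X)) i)
                                (sub_index d (slist X) i') (sub_index d (slist ({0..<m} - X)) i')) =
     (\<Sum>i<d ^ m. \<Sum>x'<d ^ card X. \<Sum>y'<d ^ (m - card X). F (sub_index d (slist X) i) (sub_index d (slist ({0..<m} - X)) i) x' y')"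
    by (rule sum.cong[OF refl], rule sum_split_index[OF d X])
  also have "\<dots> = (\<Sum>x<d ^ card X. \<Sum>y<d ^ (m - card X). \<Sum>x'<d ^ card X. \<Sum>y'<d ^ (m - card X). F x y x' y')"
    by (rule sum_split_index[OF d X])
  finally show ?thesis .
qed

lemma index_join_sub_index:
  assumes d: "d > 0" and X: "X \<subseteq> {0..<m}" and i: "i < d ^ m" and i': "i' < d ^ m"
  shows "\<rho> $$ (i,i') = \<rho> $$ (join_index d m X (sub_index d (slist X) i) (sub_index d (slist ({0..<m} - X)) i),
                             join_index d m X (sub_index d (slist X) i') (sub_index d (slist ({0..<m} - X)) i'))"
  using join_index_sub_index[OF d X i] join_index_sub_index[OF d X i'] by simp

lemma sum_delta4:
  fixes f :: "nat \<Rightarrow> nat \<Rightarrow> nat \<Rightarrow> nat \<Rightarrow> 'a::comm_monoid_add"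
  assumes a: "a < A" and b: "b < A"
  shows "(\<Sum>x<A. \<Sum>y<C. \<Sum>x'<A. \<Sum>y'<C. if x = a \<and> x' = b \<and> y = y' then f x y x' y' else 0) =
    (\<Sum>y<C. f a y b y)"
proof -
  have "(\<Sum>x<A. \<Sum>y<C. \<Sum>x'<A. \<Sum>y'<C. if x = a \<and> x' = b \<and> y = y' then f x y x' y' else 0) =
        (\<Sum>x<A. \<Sum>y<C. \<Sum>x'<A. if x = a \<and> x' = b then f x y x' y else 0)"
  proof (intro sum.cong refl)
    fix x y x' assume "y \<in> {..<C}"
    then show "(\<Sum>y'<C. if x = a \<and> x' = b \<and> y = y' then f x y x' y' else 0) = (if x = a \<and> x' = b then f x y x' y else 0)"
      by (cases "x = a \<and> x' = b", auto)
  qed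
  also have "\<dots> = (\<Sum>x<A. \<Sum>y<C. if x = a then f x y b y else 0)"
  proof (intro sum.cong refl)
    fix x y
    show "(\<Sum>x'<A. if x = a \<and> x' = b then f x y x' y else 0) = (if x = a then f x y b y else 0)"
      using b by (cases "x = a", auto)
  qed
  also have "\<dots> = (\<Sum>x<A. if x = a then (\<Sum>y<C. f x y b y) else 0)"
    by (intro sum.cong refl, auto)
  also have "\<dots> = (\<Sum>y<C. f a y b y)" using a by simp
  finally show ?thesis .
qed

lemma index_ptrace_sum_all:
  assumes d: "d > 0" and X: "X \<subseteq> {0..<m}" and a: "a < d ^ card X" and b: "b < d ^ card X"
  shows "ptrace d m X \<rho> $$ (a,b) = (\<Sum>i<d ^ m. \<Sum>i'<d ^ m.
     if sub_index d (slist X) i = a \<and> sub_index d (slist X) i' = b \<and> sub_index d (slist ({0..<m} - X)) i = sub_index d (slist ({0..<m} - X)) i'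
     then \<rho> $$ (i,i') else 0)"
proof -
  let ?P = "sub_index d (slist X)" and ?Q = "sub_index d (slist ({0..<m} - X))"
  define F where "F x y x' y' = (if x = a \<and> x' = b \<and> y = y' then \<rho> $$ (join_index d m X x y, join_index d m X x' y') else 0)" for x y x' y'
  have "(\<Sum>i<d ^ m. \<Sum>i'<d ^ m. if ?P i = a \<and> ?P i' = b \<and> ?Q i = ?Q i' then \<rho> $$ (i,i') else 0) =
        (\<Sum>i<d ^ m. \<Sum>i'<d ^ m. F (?P i) (?Q i) (?P i') (?Q i'))"
    unfolding F_def by (intro sum.cong refl, subst index_join_sub_index[OF d X], auto)
  also have "\<dots> = (\<Sum>x<d ^ card X. \<Sum>y<d ^ (m - card X). \<Sum>x'<d ^ card X. \<Sum>y'<d ^ (m - card X). F x y x' y')"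
    by (rule sum_sum_split_index[OF d X])
  also have "\<dots> = (\<Sum>y<d ^ (m - card X). \<rho> $$ (join_index d m X a y, join_index d m X b y))"
    unfolding F_def by (rule sum_delta4[OF a b])
  also have "\<dots> = ptrace d m X \<rho> $$ (a,b)" by (rule index_ptrace[OF d X a b, symmetric])
  finally show ?thesis by simp
qed

lemma quad_form_slice:
  assumes d: "d > 0" and X: "X \<subseteq> {0..<m}" and c: "c < d ^ (m - card X)"
  shows "quad_form (d ^ m) \<rho> (\<lambda>i. if sub_index d (slist ({0..<m} - X)) i = c then v (sub_index d (slist X) i) else 0)
    = (\<Sum>x<d ^ card X. \<Sum>x'<d ^ card X. cnj (v x) * \<rho> $$ (join_index d m X x c, join_index d m X x' c) * v x')"
    (is "_ = (\<Sum>x<?A. \<Sum>x'<?A. ?f x x')")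
proof -
  let ?C = "d ^ (m - card X)" and ?P = "sub_index d (slist X)" and ?Q = "sub_index d (slist ({0..<m} - X))"
  define F where "F x y x' y' = (if y = c \<and> y' = c
     then cnj (v x) * \<rho> $$ (join_index d m X x y, join_index d m X x' y') * v x' else 0)" for x y x' y'
  have "quad_form (d ^ m) \<rho> (\<lambda>i. if ?Q i = c then v (?P i) else 0)
      = (\<Sum>i<d ^ m. \<Sum>i'<d ^ m. F (?P i) (?Q i) (?P i') (?Q i'))"
    unfolding quad_form_def F_def by (intro sum.cong refl, subst index_join_sub_index[OF d X]) auto
  also have "\<dots> = (\<Sum>x<?A. \<Sum>y<?C. \<Sum>x'<?A. \<Sum>y'<?C. F x y x' y')"
    by (rule sum_sum_split_index[OF d X])
  also have "\<dots> = (\<Sum>x<?A. \<Sum>y<?C. if y = c then (\<Sum>x'<?A. ?f x x') else 0)"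
    unfolding F_def using c by (intro sum.cong refl) (auto simp: sum.If_cases)
  also have "\<dots> = (\<Sum>x<?A. \<Sum>x'<?A. ?f x x')" using c by simp
  finally show ?thesis .
qed

lemma quad_form_ptrace:
  assumes d: "d > 0" and X: "X \<subseteq> {0..<m}"
  shows "quad_form (d ^ card X) (ptrace d m X \<rho>) v = (\<Sum>c<d ^ (m - card X).
    quad_form (d ^ m) \<rho> (\<lambda>i. if sub_index d (slist ({0..<m} - X)) i = c then v (sub_index d (slist X) i) else 0))"
proof -
  have "quad_form (d ^ card X) (ptrace d m X \<rho>) v = (\<Sum>x<d ^ card X. \<Sum>x'<d ^ card X. \<Sum>c<d ^ (m - card X).
      cnj (v x) * \<rho> $$ (join_index d m X x c, join_index d m X x' c) * v x')"
    unfolding quad_form_def by (intro sum.cong refl) (simp add: index_ptrace[OF d X] sum_distrib_left sum_distrib_right)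
  also have "\<dots> = (\<Sum>c<d ^ (m - card X). \<Sum>x<d ^ card X. \<Sum>x'<d ^ card X.
      cnj (v x) * \<rho> $$ (join_index d m X x c, join_index d m X x' c) * v x')"
    by (rule sum_swap3)
  finally show ?thesis by (simp add: quad_form_slice[OF d X])
qed

lemma psd_ptrace:
  assumes d: "d > 0" and X: "X \<subseteq> {0..<m}" and \<rho>: "psd (d ^ m) \<rho>"
  shows "psd (d ^ card X) (ptrace d m X \<rho>)"
proof -
  let ?A = "d ^ card X" and ?s = "ptrace d m X \<rho>"
  have h\<rho>: "\<And>i j. i < d ^ m \<Longrightarrow> j < d ^ m \<Longrightarrow> \<rho> $$ (j,i) = cnj (\<rho> $$ (i,j))"
    using \<rho> unfolding psd_def hermitian_iff_entries by blast
  have "hermitian ?A ?s" unfolding hermitian_iff_entries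
  proof (intro conjI allI impI)
    show "?s \<in> carrier_mat ?A ?A" by (rule ptrace_carrier[OF d X])
    fix a b assume a: "a < ?A" and b: "b < ?A"
    show "?s $$ (b,a) = cnj (?s $$ (a,b))"
      unfolding index_ptrace[OF d X a b] index_ptrace[OF d X b a] cnj_sum
      by (intro sum.cong refl, rule h\<rho>, auto intro: join_index_less[OF d X])
  qed
  moreover have "Re (quad_form ?A ?s v) \<ge> 0" for v
    using \<rho> unfolding quad_form_ptrace[OF d X] psd_def by (simp add: sum_nonneg)
  ultimately show ?thesis unfolding psd_def by blast
qed

lemma trace_ptrace:
  assumes d: "d > 0" and X: "X \<subseteq> {0..<m}"
  shows "trace (d ^ card X) (ptrace d m X \<rho>) = trace (d ^ m) \<rho>"
proof -
  let ?A = "d ^ card X" and ?C = "d ^ (m - card X)" and ?D = "d ^ m"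
  let ?P = "sub_index d (slist X)" and ?Q = "sub_index d (slist ({0..<m} - X))"
  have "trace ?A (ptrace d m X \<rho>) = (\<Sum>a<?A. \<Sum>c<?C. \<rho> $$ (join_index d m X a c, join_index d m X a c))"
    unfolding trace_def by (intro sum.cong refl, rule index_ptrace[OF d X], auto)
  also have "\<dots> = (\<Sum>i<?D. \<rho> $$ (join_index d m X (?P i) (?Q i), join_index d m X (?P i) (?Q i)))"
    by (rule sum_split_index[OF d X, symmetric])
  also have "\<dots> = trace ?D \<rho>" unfolding trace_def by (intro sum.cong refl, simp add: join_index_sub_index[OF d X])
  finally show ?thesis .
qed

lemma density_op_ptrace:
  assumes d: "d > 0" and X: "X \<subseteq> {0..<m}" and \<rho>: "density_op (d ^ m) \<rho>"
  shows "density_op (d ^ card X) (ptrace d m X \<rho>)"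
  using psd_ptrace[OF d X] trace_ptrace[OF d X, of \<rho>] \<rho> unfolding density_op_iff_psd by simp

lemma sub_index_slist_eq_iff:
  assumes d: "d > 0" and S: "finite S"
  shows "sub_index d (slist S) i = sub_index d (slist S) j \<longleftrightarrow> (\<forall>t\<in>S. digit d t i = digit d t j)"
  unfolding sub_index_eq_iff[OF d] using S by (metis in_set_conv_nth set_sorted_list_of_set)

lemma slist_image_nth:
  assumes Z: "finite Z" and Y: "Y' \<subseteq> {..<card Z}"
  shows "slist ((!) (slist Z) ` Y') = map ((!) (slist Z)) (slist Y')"
proof -
  have fY: "finite Y'" using Y finite_subset by blast
  have inj: "inj_on ((!) (slist Z)) {..<card Z}" using Z by (auto simp: inj_on_def nth_eq_iff_index_eq)
  have "sorted_wrt (<) (map ((!) (slist Z)) (slist Y'))"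
    unfolding sorted_wrt_map
  proof (rule sorted_wrt_mono_rel[OF _ strict_sorted_list_of_set])
    fix x y assume "x \<in> set (slist Y')" "y \<in> set (slist Y')" "x < y"
    then have "x < card Z" "y < card Z" "x < y" using fY Y by auto
    then show "slist Z ! x < slist Z ! y" using Z strict_sorted_list_of_set[of Z]
      by (metis length_sorted_list_of_set sorted_wrt_nth_less)
  qed
  moreover have "set (map ((!) (slist Z)) (slist Y')) = (!) (slist Z) ` Y'" using fY by simp
  moreover have "length (map ((!) (slist Z)) (slist Y')) = card ((!) (slist Z) ` Y')"
    using fY card_image[OF inj_on_subset[OF inj Y]] by simp
  ultimately show ?thesis using fY by (metis finite_imageI sorted_list_of_set_unique)
qed

section \<open>Subadditivity and the Araki-Lieb inequality\<close>

lemma sum_swap4: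
  "(\<Sum>w\<in>A. \<Sum>w'\<in>B. \<Sum>i\<in>C. \<Sum>i'\<in>D. f w w' i i') = (\<Sum>i\<in>C. \<Sum>i'\<in>D. \<Sum>w\<in>A. \<Sum>w'\<in>B. f w w' i i')"
proof -
  have "(\<Sum>w\<in>A. \<Sum>w'\<in>B. \<Sum>i\<in>C. \<Sum>i'\<in>D. f w w' i i') = (\<Sum>w\<in>A. \<Sum>i\<in>C. \<Sum>i'\<in>D. \<Sum>w'\<in>B. f w w' i i')"
    by (rule sum.cong[OF refl], subst sum.swap, rule sum.cong[OF refl], rule sum.swap)
  also have "\<dots> = (\<Sum>i\<in>C. \<Sum>w\<in>A. \<Sum>i'\<in>D. \<Sum>w'\<in>B. f w w' i i')" by (rule sum.swap)
  also have "\<dots> = (\<Sum>i\<in>C. \<Sum>i'\<in>D. \<Sum>w\<in>A. \<Sum>w'\<in>B. f w w' i i')" by (rule sum.cong[OF refl], rule sum.swap)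
  finally show ?thesis .
qed

lemma sum_delta_conj:
  fixes g :: "complex" and W :: nat
  assumes "p' < W"
  shows "(\<Sum>w'<W. if P w' \<and> p' = w' then g else 0) = (if P p' then g else 0)"
proof -
  have "(\<Sum>w'<W. if P w' \<and> p' = w' then g else 0) = (\<Sum>w'<W. if p' = w' then (if P w' then g else 0) else 0)"
    by (rule sum.cong, auto)
  also have "\<dots> = (if p' \<in> {..<W} then (if P p' then g else 0) else 0)"
    by (rule sum.delta'[OF finite_lessThan])
  finally show ?thesis using assms by simp
qed

lemma sum_sum_delta_conj:
  fixes g :: "complex" and W :: nat
  assumes "p < W" "p' < W"
  shows "(\<Sum>w<W. \<Sum>w'<W. if P w w' \<and> p = w \<and> p' = w' then g else 0) = (if P p p' then g else 0)"
proof -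
  have "(\<Sum>w<W. \<Sum>w'<W. if P w w' \<and> p = w \<and> p' = w' then g else 0) =
        (\<Sum>w<W. if p = w then (if P w p' then g else 0) else 0)"
  proof (rule sum.cong[OF refl])
    fix w show "(\<Sum>w'<W. if P w w' \<and> p = w \<and> p' = w' then g else 0) = (if p = w then (if P w p' then g else 0) else 0)"
      using assms sum_delta_conj[of p' W "P w" g] by (cases "p = w", auto)
  qed
  also have "\<dots> = (if p \<in> {..<W} then (if P p p' then g else 0) else 0)"
    by (rule sum.delta'[OF finite_lessThan])
  finally show ?thesis using assms by simp
qed

lemma image_nth_slist_subset:
  assumes Z: "finite Z" and Y': "Y' \<subseteq> {..<card Z}"
  shows "(!) (slist Z) ` Y' \<subseteq> Z"
proof
  fix t assume "t \<in> (!) (slist Z) ` Y'"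
  then obtain q where "q \<in> Y'" "t = slist Z ! q" by blast
  then show "t \<in> Z" using Z Y' nth_mem[of q "slist Z"] by auto
qed

lemma if_then_sum_sum:
  "(if P then (\<Sum>i\<in>A. \<Sum>i'\<in>B. if Q i i' then g i i' else 0) else 0)
    = (\<Sum>i\<in>A. \<Sum>i'\<in>B. if P \<and> Q i i' then g i i' else (0 :: 'a :: comm_monoid_add))"
  by (cases P) auto

lemma sub_index_nested:
  assumes d: "d > 0" and Z: "finite Z" and Y': "Y' \<subseteq> {..<card Z}"
  shows "sub_index d (slist Y') (sub_index d (slist Z) i) = sub_index d (slist ((!) (slist Z) ` Y')) i"
  unfolding slist_image_nth[OF Z Y'] using Y' Z finite_subset[OF Y'] by (intro sub_index_sub_index[OF d]) auto

lemma sub_index_nested_compl_eq_iff: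
  assumes d: "d > 0" and Z: "Z \<subseteq> {0..<m}" and Y': "Y' \<subseteq> {0..<card Z}"
  defines "Y \<equiv> (!) (slist Z) ` Y'"
  shows "(sub_index d (slist ({0..<card Z} - Y')) (sub_index d (slist Z) i)
          = sub_index d (slist ({0..<card Z} - Y')) (sub_index d (slist Z) i')
        \<and> sub_index d (slist ({0..<m} - Z)) i = sub_index d (slist ({0..<m} - Z)) i')
     \<longleftrightarrow> sub_index d (slist ({0..<m} - Y)) i = sub_index d (slist ({0..<m} - Y)) i'"
proof -
  let ?zs = "slist Z"
  have fZ: "finite Z" using Z finite_subset by blast
  have lzs: "length ?zs = card Z" "distinct ?zs" "set ?zs = Z" using fZ by auto
  have inj: "inj_on ((!) ?zs) {0..<card Z}" using lzs by (auto simp: inj_on_def nth_eq_iff_index_eq)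
  have "(!) ?zs ` {0..<length ?zs} = set ?zs" by (auto simp: in_set_conv_nth)
  then have range: "(!) ?zs ` {0..<card Z} = Z" unfolding lzs(1) lzs(3) .
  have "(!) ?zs ` ({0..<card Z} - Y') = (!) ?zs ` {0..<card Z} - (!) ?zs ` Y'"
    by (rule inj_on_image_set_diff[OF inj]) (use Y' in auto)
  then have img: "(!) ?zs ` ({0..<card Z} - Y') = Z - Y" unfolding range Y_def .
  have YZ: "Y \<subseteq> Z" unfolding Y_def by (rule image_nth_slist_subset[OF fZ]) (use Y' in auto)
  have "sub_index d (slist ({0..<card Z} - Y')) (sub_index d ?zs i)
        = sub_index d (slist ({0..<card Z} - Y')) (sub_index d ?zs i')
     \<longleftrightarrow> (\<forall>q\<in>{0..<card Z} - Y'. digit d q (sub_index d ?zs i) = digit d q (sub_index d ?zs i'))"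
    by (rule sub_index_slist_eq_iff[OF d]) simp
  also have "\<dots> \<longleftrightarrow> (\<forall>q\<in>{0..<card Z} - Y'. digit d (?zs ! q) i = digit d (?zs ! q) i')"
    using lzs(1) by (simp add: digit_sub_index[OF d])
  also have "\<dots> \<longleftrightarrow> (\<forall>t\<in>Z - Y. digit d t i = digit d t i')" unfolding img[symmetric] by blast
  finally have inner: "sub_index d (slist ({0..<card Z} - Y')) (sub_index d ?zs i)
        = sub_index d (slist ({0..<card Z} - Y')) (sub_index d ?zs i')
     \<longleftrightarrow> (\<forall>t\<in>Z - Y. digit d t i = digit d t i')" .
  have outer: "sub_index d (slist ({0..<m} - Z)) i = sub_index d (slist ({0..<m} - Z)) i'
     \<longleftrightarrow> (\<forall>t\<in>{0..<m} - Z. digit d t i = digit d t i')"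
    by (rule sub_index_slist_eq_iff[OF d]) simp
  have whole: "sub_index d (slist ({0..<m} - Y)) i = sub_index d (slist ({0..<m} - Y)) i'
     \<longleftrightarrow> (\<forall>t\<in>{0..<m} - Y. digit d t i = digit d t i')"
    by (rule sub_index_slist_eq_iff[OF d]) simp
  from YZ have "{0..<m} - Y = (Z - Y) \<union> ({0..<m} - Z)" using Z by auto
  then show ?thesis unfolding inner outer whole by blast
qed

lemma ptrace_ptrace:
  assumes d: "d > 0" and Z: "Z \<subseteq> {0..<m}" and Y': "Y' \<subseteq> {0..<card Z}"
  shows "ptrace d (card Z) Y' (ptrace d m Z \<rho>) = ptrace d m ((!) (slist Z) ` Y') \<rho>"
proof -
  define zs where "zs = slist Z"
  define Y where "Y = (!) zs ` Y'"
  have fZ: "finite Z" using Z finite_subset by blast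
  have lzs: "length zs = card Z" "set zs = Z" unfolding zs_def using fZ by auto
  have inj: "inj_on ((!) zs) {..<card Z}" using fZ unfolding zs_def by (auto simp: inj_on_def nth_eq_iff_index_eq)
  have Y'l: "Y' \<subseteq> {..<card Z}" using Y' by auto
  have cardY: "card Y = card Y'" unfolding Y_def using card_image[OF inj_on_subset[OF inj Y'l]] .
  have Ym: "Y \<subseteq> {0..<m}" unfolding Y_def zs_def using image_nth_slist_subset[OF fZ Y'l] Z by blast
  let ?W = "d ^ card Z" and ?D = "d ^ m"
  let ?E = "\<lambda>i i'. sub_index d (slist ({0..<m} - Z)) i = sub_index d (slist ({0..<m} - Z)) i'"
  have cond: "(sub_index d (slist Y') (sub_index d zs i) = a \<and> sub_index d (slist Y') (sub_index d zs i') = b \<and>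
      sub_index d (slist ({0..<card Z} - Y')) (sub_index d zs i) = sub_index d (slist ({0..<card Z} - Y')) (sub_index d zs i') \<and> ?E i i')
    \<longleftrightarrow> (sub_index d (slist Y) i = a \<and> sub_index d (slist Y) i' = b \<and>
      sub_index d (slist ({0..<m} - Y)) i = sub_index d (slist ({0..<m} - Y)) i')"
    for i i' a b
    using sub_index_nested[OF d fZ Y'l] sub_index_nested_compl_eq_iff[OF d Z Y', of i i']
    unfolding Y_def zs_def by auto
  show ?thesis
  proof (rule eq_matI)
    fix a b assume "a < dim_row (ptrace d m ((!) (slist Z) ` Y') \<rho>)" "b < dim_col (ptrace d m ((!) (slist Z) ` Y') \<rho>)"
    then have a: "a < d ^ card Y'" and b: "b < d ^ card Y'"
      using ptrace_carrier[OF d Ym, of \<rho>] cardY unfolding Y_def zs_def by auto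
    have Y'Z: "Y' \<subseteq> {0..<card Z}" by fact
    let ?C1 = "\<lambda>w w'. sub_index d (slist Y') w = a \<and> sub_index d (slist Y') w' = b \<and>
      sub_index d (slist ({0..<card Z} - Y')) w = sub_index d (slist ({0..<card Z} - Y')) w'"
    have "ptrace d (card Z) Y' (ptrace d m Z \<rho>) $$ (a,b) =
       (\<Sum>w<?W. \<Sum>w'<?W. if ?C1 w w' then ptrace d m Z \<rho> $$ (w,w') else 0)"
      by (rule index_ptrace_sum_all[OF d Y'Z a b])
    also have "\<dots> = (\<Sum>w<?W. \<Sum>w'<?W. \<Sum>i<?D. \<Sum>i'<?D.
        if ?C1 w w' \<and> sub_index d zs i = w \<and> sub_index d zs i' = w' \<and> ?E i i' then \<rho> $$ (i,i') else 0)"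
    proof (intro sum.cong refl)
      fix w w' assume w: "w \<in> {..<?W}" and w': "w' \<in> {..<?W}"
      show "(if ?C1 w w' then ptrace d m Z \<rho> $$ (w,w') else 0) = (\<Sum>i<?D. \<Sum>i'<?D.
        if ?C1 w w' \<and> sub_index d zs i = w \<and> sub_index d zs i' = w' \<and> ?E i i' then \<rho> $$ (i,i') else 0)"
      proof -
        have "ptrace d m Z \<rho> $$ (w,w') = (\<Sum>i<?D. \<Sum>i'<?D. if sub_index d zs i = w \<and> sub_index d zs i' = w' \<and> ?E i i' then \<rho> $$ (i,i') else 0)"
          unfolding zs_def using w w' lzs by (intro index_ptrace_sum_all[OF d Z], auto simp: zs_def)
        then show ?thesis by (simp only: if_then_sum_sum)
      qed
    qed
    also have "\<dots> = (\<Sum>i<?D. \<Sum>i'<?D. \<Sum>w<?W. \<Sum>w'<?W.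
        if (?C1 w w' \<and> ?E i i') \<and> sub_index d zs i = w \<and> sub_index d zs i' = w' then \<rho> $$ (i,i') else 0)"
      by (subst sum_swap4, intro sum.cong refl, auto)
    also have "\<dots> = (\<Sum>i<?D. \<Sum>i'<?D. if ?C1 (sub_index d zs i) (sub_index d zs i') \<and> ?E i i' then \<rho> $$ (i,i') else 0)"
      by (intro sum.cong refl sum_sum_delta_conj, insert sub_index_less[OF d, of zs] lzs, auto)
    also have "\<dots> = (\<Sum>i<?D. \<Sum>i'<?D. if sub_index d (slist Y) i = a \<and> sub_index d (slist Y) i' = b \<and>
        sub_index d (slist ({0..<m} - Y)) i = sub_index d (slist ({0..<m} - Y)) i' then \<rho> $$ (i,i') else 0)"
      by (intro sum.cong refl, unfold cond[symmetric], auto)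
    also have "\<dots> = ptrace d m Y \<rho> $$ (a,b)"
      using cardY a b by (intro index_ptrace_sum_all[OF d Ym, symmetric], auto)
    finally show "ptrace d (card Z) Y' (ptrace d m Z \<rho>) $$ (a,b) = ptrace d m ((!) (slist Z) ` Y') \<rho> $$ (a,b)"
      unfolding Y_def zs_def .
  qed (insert cardY, auto simp: ptrace_def Let_def Y_def zs_def)
qed

lemma sum_quad_form_tensor:
  assumes d: "d > 0" and X: "X \<subseteq> {0..<m}" and W: "unitary (d ^ (m - card X)) W"
  shows "(\<Sum>c<d ^ (m - card X). quad_form (d ^ m) \<sigma> (\<lambda>i. V $$ (sub_index d (slist X) i, a) * W $$ (sub_index d (slist ({0..<m} - X)) i, c)))
       = quad_form (d ^ card X) (ptrace d m X \<sigma>) (\<lambda>x. V $$ (x, a))"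
proof -
  let ?A = "d ^ card X" and ?C = "d ^ (m - card X)" and ?D = "d ^ m"
  let ?P = "sub_index d (slist X)" and ?Q = "sub_index d (slist ({0..<m} - X))"
  let ?s = "\<lambda>x y x' y'. \<sigma> $$ (join_index d m X x y, join_index d m X x' y')"
  have "(\<Sum>c<?C. quad_form ?D \<sigma> (\<lambda>i. V $$ (?P i, a) * W $$ (?Q i, c))) =
     (\<Sum>c<?C. \<Sum>x<?A. \<Sum>y<?C. \<Sum>x'<?A. \<Sum>y'<?C.
        cnj (V $$ (x, a) * W $$ (y, c)) * ?s x y x' y' * (V $$ (x', a) * W $$ (y', c)))"
  proof (rule sum.cong[OF refl])
    fix c
    show "quad_form ?D \<sigma> (\<lambda>i. V $$ (?P i, a) * W $$ (?Q i, c)) = (\<Sum>x<?A. \<Sum>y<?C. \<Sum>x'<?A. \<Sum>y'<?C.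
        cnj (V $$ (x, a) * W $$ (y, c)) * ?s x y x' y' * (V $$ (x', a) * W $$ (y', c)))"
      unfolding quad_form_def
      by (subst sum_sum_split_index[OF d X, symmetric], intro sum.cong refl, subst index_join_sub_index[OF d X], auto)
  qed
  also have "\<dots> = (\<Sum>x<?A. \<Sum>y<?C. \<Sum>x'<?A. \<Sum>y'<?C. \<Sum>c<?C.
        cnj (V $$ (x, a)) * ?s x y x' y' * V $$ (x', a) * (W $$ (y', c) * cnj (W $$ (y, c))))"
    by (subst sum.swap, rule sum.cong[OF refl], subst sum.swap, rule sum.cong[OF refl],
        subst sum.swap, rule sum.cong[OF refl], subst sum.swap, rule sum.cong[OF refl], simp add: ac_simps)
  also have "\<dots> = (\<Sum>x<?A. \<Sum>y<?C. \<Sum>x'<?A. \<Sum>y'<?C.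
        cnj (V $$ (x, a)) * ?s x y x' y' * V $$ (x', a) * (if y' = y then 1 else 0))"
    by (intro sum.cong refl, simp add: sum_distrib_left[symmetric] unitary_rows_orthonormal[OF W])
  also have "\<dots> = (\<Sum>x<?A. \<Sum>y<?C. \<Sum>x'<?A. cnj (V $$ (x, a)) * ?s x y x' y * V $$ (x', a))"
    by (intro sum.cong refl, simp add: if_distrib cong: if_cong)
  also have "\<dots> = (\<Sum>x<?A. \<Sum>x'<?A. \<Sum>y<?C. cnj (V $$ (x, a)) * ?s x y x' y * V $$ (x', a))"
    by (rule sum.cong[OF refl], rule sum.swap)
  also have "\<dots> = quad_form ?A (ptrace d m X \<sigma>) (\<lambda>x. V $$ (x, a))"
    unfolding quad_form_def by (intro sum.cong refl, simp add: index_ptrace[OF d X] sum_distrib_left sum_distrib_right)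
  finally show ?thesis .
qed

lemma join_index_compl:
  assumes X: "X \<subseteq> {0..<m}"
  shows "join_index d m ({0..<m} - X) c a = join_index d m X a c"
  unfolding join_index_def double_diff[OF X subset_refl] by simp

lemma sum_quad_form_tensor_compl:
  assumes d: "d > 0" and X: "X \<subseteq> {0..<m}" and V: "unitary (d ^ card X) V"
  shows "(\<Sum>a<d ^ card X. quad_form (d ^ m) \<sigma> (\<lambda>i. V $$ (sub_index d (slist X) i, a) * W $$ (sub_index d (slist ({0..<m} - X)) i, c)))
       = quad_form (d ^ (m - card X)) (ptrace d m ({0..<m} - X) \<sigma>) (\<lambda>y. W $$ (y, c))"
proof -
  let ?Y = "{0..<m} - X"
  have cY: "card ?Y = m - card X" by (rule card_compl[OF X])
  have "card X \<le> m" using card_mono[OF finite_atLeastLessThan X] by simp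
  then have cYY: "m - card ?Y = card X" using cY by simp
  have "(\<Sum>a<d ^ card X. quad_form (d ^ m) \<sigma> (\<lambda>i. V $$ (sub_index d (slist X) i, a) * W $$ (sub_index d (slist ?Y) i, c)))
      = (\<Sum>a<d ^ (m - card ?Y). quad_form (d ^ m) \<sigma>
          (\<lambda>i. W $$ (sub_index d (slist ?Y) i, c) * V $$ (sub_index d (slist ({0..<m} - ?Y)) i, a)))"
    unfolding cYY double_diff[OF X subset_refl] by (simp add: ac_simps)
  also have "\<dots> = quad_form (d ^ card ?Y) (ptrace d m ?Y \<sigma>) (\<lambda>y. W $$ (y, c))"
    using V unfolding cYY[symmetric] by (rule sum_quad_form_tensor[OF d Diff_subset[of "{0..<m}" X]])
  finally show ?thesis unfolding cY .
qed

lemma tensor_basis_orthonormal: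
  assumes d: "d > 0" and X: "X \<subseteq> {0..<m}"
    and V: "unitary (d ^ card X) V" and W: "unitary (d ^ (m - card X)) W"
    and a: "a < d ^ card X" "a' < d ^ card X" and c: "c < d ^ (m - card X)" "c' < d ^ (m - card X)"
  shows "(\<Sum>i<d ^ m. cnj (V $$ (sub_index d (slist X) i, a) * W $$ (sub_index d (slist ({0..<m} - X)) i, c))
      * (V $$ (sub_index d (slist X) i, a') * W $$ (sub_index d (slist ({0..<m} - X)) i, c')))
    = (if (a, c) = (a', c') then 1 else 0)"
proof -
  have "(\<Sum>i<d ^ m. cnj (V $$ (sub_index d (slist X) i, a) * W $$ (sub_index d (slist ({0..<m} - X)) i, c))
      * (V $$ (sub_index d (slist X) i, a') * W $$ (sub_index d (slist ({0..<m} - X)) i, c')))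
    = (\<Sum>x<d ^ card X. \<Sum>y<d ^ (m - card X). cnj (V $$ (x, a) * W $$ (y, c)) * (V $$ (x, a') * W $$ (y, c')))"
    by (rule sum_split_index[OF d X])
  also have "\<dots> = (\<Sum>x<d ^ card X. cnj (V $$ (x, a)) * V $$ (x, a'))
      * (\<Sum>y<d ^ (m - card X). cnj (W $$ (y, c)) * W $$ (y, c'))"
    by (simp add: sum_product ac_simps)
  also have "\<dots> = (if (a, c) = (a', c') then 1 else 0)"
    unfolding unitary_cols_orthonormal[OF V a] unitary_cols_orthonormal[OF W c] by auto
  finally show ?thesis .
qed

text \<open>Measure in the product of eigenbases of the two marginals. The outcome
  distribution p has the spectra of the marginals as its marginals and, being a diagonal of the
  state in an orthonormal basis, entropy at least S(\<sigma>).\<close>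

lemma vn_entropy_subadditive:
  assumes d: "d > 0" and X: "X \<subseteq> {0..<m}" and \<sigma>: "density_op (d ^ m) \<sigma>"
  shows "vn_entropy \<sigma> \<le> marg_entropy d m X \<sigma> + marg_entropy d m ({0..<m} - X) \<sigma>"
proof -
  let ?A = "d ^ card X" and ?C = "d ^ (m - card X)" and ?D = "d ^ m" and ?Y = "{0..<m} - X"
  let ?P = "sub_index d (slist X)" and ?Q = "sub_index d (slist ?Y)"
  have \<sigma>_psd: "psd ?D \<sigma>" and \<sigma>_trace: "trace ?D \<sigma> = 1" using \<sigma> unfolding density_op_iff_psd by auto
  have sX: "density_op ?A (ptrace d m X \<sigma>)" by (rule density_op_ptrace[OF d X \<sigma>])
  have sY: "density_op ?C (ptrace d m ?Y \<sigma>)"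
    using density_op_ptrace[OF d Diff_subset[of "{0..<m}" X] \<sigma>] unfolding card_compl[OF X] .
  obtain V \<alpha> where V: "unitary ?A V" and sX_eq: "ptrace d m X \<sigma> = V * real_diag_mat ?A \<alpha> * mat_adjoint V"
    and trace_\<alpha>: "trace ?A (ptrace d m X \<sigma>) = complex_of_real (\<Sum>k<?A. \<alpha> k)"
    using psd_spectral sX unfolding density_op_iff_psd by metis
  obtain W \<beta> where W: "unitary ?C W" and sY_eq: "ptrace d m ?Y \<sigma> = W * real_diag_mat ?C \<beta> * mat_adjoint W"
    using psd_spectral sY unfolding density_op_iff_psd by metis
  have sum_\<alpha>: "(\<Sum>k<?A. \<alpha> k) = 1" using trace_\<alpha> sX unfolding density_op_iff_psd by (metis of_real_eq_1_iff)
  define u where "u ac i = V $$ (?P i, fst ac) * W $$ (?Q i, snd ac)" for ac i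
  define p where "p a c = Re (quad_form ?D \<sigma> (u (a,c)))" for a c
  have p0: "p a c \<ge> 0" for a c using \<sigma>_psd unfolding psd_def p_def by auto
  have p_fst: "(\<Sum>c<?C. p a c) = \<alpha> a" if "a < ?A" for a
    using sum_quad_form_tensor[OF d X W, of \<sigma> V a] quad_form_unitary_diag_col[OF V that]
    unfolding p_def u_def sX_eq Re_sum[symmetric] by simp
  have p_snd: "(\<Sum>a<?A. p a c) = \<beta> c" if "c < ?C" for c
    using sum_quad_form_tensor_compl[OF d X V, of \<sigma> W c] quad_form_unitary_diag_col[OF W that]
    unfolding p_def u_def sY_eq Re_sum[symmetric] by simp
  have p_sum: "(\<Sum>a<?A. \<Sum>c<?C. p a c) = 1" using p_fst sum_\<alpha> by simp
  define I where "I = {..<?A} \<times> {..<?C}"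
  have orth: "(\<Sum>i<?D. cnj (u ac i) * u ac' i) = (if ac = ac' then 1 else 0)"
    if ac: "ac \<in> I" and ac': "ac' \<in> I" for ac ac'
  proof -
    obtain a c a' c' where "ac = (a,c)" "ac' = (a',c')" "a < ?A" "c < ?C" "a' < ?A" "c' < ?C"
      using ac ac' unfolding I_def by blast
    then show ?thesis using tensor_basis_orthonormal[OF d X V W, of a a' c c'] unfolding u_def by simp
  qed
  have "vn_entropy \<sigma> \<le> (\<Sum>ac\<in>I. eta (Re (quad_form ?D \<sigma> (u ac))))"
    by (rule vn_entropy_le_orthonormal_family[OF \<sigma>_psd \<sigma>_trace _ orth])
      (use p_sum in \<open>simp_all add: I_def sum.cartesian_product' p_def\<close>)
  also have "\<dots> = (\<Sum>a<?A. \<Sum>c<?C. eta (p a c))"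
    unfolding I_def sum.cartesian_product' p_def by simp
  also have "\<dots> \<le> (\<Sum>a<?A. eta (\<Sum>c<?C. p a c)) + (\<Sum>c<?C. eta (\<Sum>a<?A. p a c))"
    by (rule sum_eta_le_marginals[OF p0 p_sum])
  also have "\<dots> = (\<Sum>a<?A. eta (\<alpha> a)) + (\<Sum>c<?C. eta (\<beta> c))"
    using p_fst p_snd by simp
  also have "\<dots> = marg_entropy d m X \<sigma> + marg_entropy d m ?Y \<sigma>"
    unfolding marg_entropy_def sX_eq sY_eq vn_entropy_unitary_diag[OF V] vn_entropy_unitary_diag[OF W] ..
  finally show ?thesis .
qed

lemma image_nth_slist_positions:
  assumes Z: "finite Z" and X: "X \<subseteq> Z"
  shows "(!) (slist Z) ` {q. q < card Z \<and> slist Z ! q \<in> X} = X"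
proof
  show "(!) (slist Z) ` {q. q < card Z \<and> slist Z ! q \<in> X} \<subseteq> X" by auto
  show "X \<subseteq> (!) (slist Z) ` {q. q < card Z \<and> slist Z ! q \<in> X}"
  proof
    fix t assume t: "t \<in> X"
    then have "t \<in> set (slist Z)" using Z X by auto
    then obtain q where "q < length (slist Z)" "slist Z ! q = t" by (auto simp: in_set_conv_nth)
    then show "t \<in> (!) (slist Z) ` {q. q < card Z \<and> slist Z ! q \<in> X}" using t Z by force
  qed
qed

lemma marg_entropy_subadditive:
  assumes d: "d > 0" and X: "X \<subseteq> {0..<m}" and Y: "Y \<subseteq> {0..<m}" and XY: "X \<inter> Y = {}"
    and \<rho>: "density_op (d ^ m) \<rho>"
  shows "marg_entropy d m (X \<union> Y) \<rho> \<le> marg_entropy d m X \<rho> + marg_entropy d m Y \<rho>"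
proof -
  define Z where "Z = X \<union> Y"
  have Zm: "Z \<subseteq> {0..<m}" unfolding Z_def using X Y by auto
  have fZ: "finite Z" using Zm finite_subset by blast
  define X' where "X' = {q. q < card Z \<and> slist Z ! q \<in> X}"
  have X'Z: "X' \<subseteq> {0..<card Z}" unfolding X'_def by auto
  have nthZ: "slist Z ! q \<in> X \<union> Y" if "q < card Z" for q
  proof -
    have "slist Z ! q \<in> set (slist Z)" using that by (intro nth_mem) simp
    then show ?thesis using fZ by (simp add: Z_def)
  qed
  have "{0..<card Z} - X' = {q. q < card Z \<and> slist Z ! q \<in> Y}"
  proof (rule Set.set_eqI)
    fix q show "q \<in> {0..<card Z} - X' \<longleftrightarrow> q \<in> {q. q < card Z \<and> slist Z ! q \<in> Y}"
      using nthZ[of q] XY unfolding X'_def by auto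
  qed
  then have imgY: "(!) (slist Z) ` ({0..<card Z} - X') = Y"
    using image_nth_slist_positions[OF fZ, of Y] unfolding Z_def by auto
  have imgX: "(!) (slist Z) ` X' = X"
    using image_nth_slist_positions[OF fZ, of X] unfolding X'_def Z_def by auto
  define \<tau> where "\<tau> = ptrace d m Z \<rho>"
  have \<tau>: "density_op (d ^ card Z) \<tau>" unfolding \<tau>_def by (rule density_op_ptrace[OF d Zm \<rho>])
  have "vn_entropy \<tau> \<le> marg_entropy d (card Z) X' \<tau> + marg_entropy d (card Z) ({0..<card Z} - X') \<tau>"
    by (rule vn_entropy_subadditive[OF d X'Z \<tau>])
  also have "marg_entropy d (card Z) X' \<tau> = marg_entropy d m X \<rho>"
    unfolding marg_entropy_def \<tau>_def ptrace_ptrace[OF d Zm X'Z] imgX ..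
  also have "marg_entropy d (card Z) ({0..<card Z} - X') \<tau> = marg_entropy d m Y \<rho>"
    unfolding marg_entropy_def \<tau>_def ptrace_ptrace[OF d Zm Diff_subset[of "{0..<card Z}" X']] imgY ..
  finally show ?thesis unfolding \<tau>_def marg_entropy_def Z_def .
qed

lemma vn_entropy_transpose: "A \<in> carrier_mat n n \<Longrightarrow> vn_entropy (transpose_mat A) = vn_entropy A"
  unfolding vn_entropy_def eigvals_list_def by simp

lemma marg_entropy_pure_compl:
  assumes d: "d > 0" and X: "X \<subseteq> {0..<m}" and Psi: "Psi \<in> carrier_mat (d ^ m) 1"
    and t: "trace (d ^ m) (Psi * mat_adjoint Psi) = 1"
  shows "marg_entropy d m X (Psi * mat_adjoint Psi) = marg_entropy d m ({0..<m} - X) (Psi * mat_adjoint Psi)"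
proof -
  let ?A = "d ^ card X" and ?C = "d ^ (m - card X)" and ?D = "d ^ m" and ?Y = "{0..<m} - X"
  let ?\<tau> = "Psi * mat_adjoint Psi"
  have Y: "?Y \<subseteq> {0..<m}" by auto
  have cY: "card ?Y = m - card X" by (rule card_compl[OF X])
  have "card X \<le> m" using card_mono[OF finite_atLeastLessThan X] by simp
  then have cYY: "m - card ?Y = card X" using cY by simp
  have \<tau>e: "?\<tau> $$ (i,j) = Psi $$ (i,0) * cnj (Psi $$ (j,0))" if "i < ?D" "j < ?D" for i j
    using index_mult_adjoint[OF Psi Psi that] by simp
  define N where "N = mat ?A ?C (\<lambda>(a,c). Psi $$ (join_index d m X a c, 0))"
  have N: "N \<in> carrier_mat ?A ?C" unfolding N_def by simp
  have sX: "ptrace d m X ?\<tau> = N * mat_adjoint N"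
  proof (rule eq_matI)
    fix a b assume "a < dim_row (N * mat_adjoint N)" "b < dim_col (N * mat_adjoint N)"
    then have a: "a < ?A" and b: "b < ?A" using N by auto
    show "ptrace d m X ?\<tau> $$ (a,b) = (N * mat_adjoint N) $$ (a,b)"
      unfolding index_ptrace[OF d X a b] index_mult_adjoint[OF N N a b]
      using a b by (intro sum.cong refl, simp add: \<tau>e join_index_less[OF d X] N_def)
  qed (insert N ptrace_carrier[OF d X], auto)
  have sY: "ptrace d m ?Y ?\<tau> = transpose_mat (mat_adjoint N * N)"
  proof (rule eq_matI)
    fix c c' assume "c < dim_row (transpose_mat (mat_adjoint N * N))" "c' < dim_col (transpose_mat (mat_adjoint N * N))"
    then have c: "c < ?C" and c': "c' < ?C" using N by auto
    have c1: "c < d ^ card ?Y" and c1': "c' < d ^ card ?Y" using c c' cY by auto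
    have "transpose_mat (mat_adjoint N * N) $$ (c,c') = (mat_adjoint N * N) $$ (c',c)" using c c' N by simp
    also have "\<dots> = (\<Sum>l<?A. cnj (N $$ (l,c')) * N $$ (l,c))" by (rule index_adjoint_mult[OF N N c' c])
    finally have tr1: "transpose_mat (mat_adjoint N * N) $$ (c,c') = (\<Sum>l<?A. cnj (N $$ (l,c')) * N $$ (l,c))" .
    show "ptrace d m ?Y ?\<tau> $$ (c,c') = transpose_mat (mat_adjoint N * N) $$ (c,c')"
      unfolding index_ptrace[OF d Y c1 c1'] cYY tr1 using c c'
      by (intro sum.cong refl, simp add: join_index_compl[OF X] \<tau>e join_index_less[OF d X] N_def mult.commute)
  qed (insert N ptrace_carrier[OF d Y] cY, auto)
  have tN: "trace ?A (N * mat_adjoint N) = 1" using trace_ptrace[OF d X, of ?\<tau>] t unfolding sX by simp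
  have "marg_entropy d m X ?\<tau> = vn_entropy (N * mat_adjoint N)" unfolding marg_entropy_def sX ..
  also have "\<dots> = vn_entropy (mat_adjoint N * N)" by (rule vn_entropy_gram_eq[OF N tN])
  also have "\<dots> = vn_entropy (transpose_mat (mat_adjoint N * N))"
    by (rule vn_entropy_transpose[symmetric], insert N, auto)
  also have "\<dots> = marg_entropy d m ?Y ?\<tau>" unfolding marg_entropy_def sY ..
  finally show ?thesis .
qed

lemma ptrace_ptrace_prefix:
  assumes d: "d > 0" and Y: "Y \<subseteq> {0..<m}" and mk: "m \<le> M"
  shows "ptrace d m Y (ptrace d M {0..<m} \<tau>) = ptrace d M Y \<tau>"
proof -
  have Z: "{0..<m} \<subseteq> {0..<M}" using mk by auto
  have "ptrace d (card {0..<m}) Y (ptrace d M {0..<m} \<tau>) = ptrace d M ((!) (slist {0..<m}) ` Y) \<tau>"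
    by (rule ptrace_ptrace[OF d Z], insert Y, auto)
  moreover have "(!) (slist {0..<m}) ` Y = Y" using Y by (force simp: image_def)
  ultimately show ?thesis by simp
qed

text \<open>For \<rho> = U diag(\<lambda>) U^*, the vector carrying sqrt(\<lambda> c) U(a,c) at the index with digits a on
  the first m factors and c on the last m factors is a purification of \<rho>.\<close>

lemma purification:
  assumes d: "d > 0" and \<rho>: "density_op (d ^ m) \<rho>"
  obtains Psi where "Psi \<in> carrier_mat (d ^ (2 * m)) 1" "ptrace d (2 * m) {0..<m} (Psi * mat_adjoint Psi) = \<rho>"
proof -
  let ?M = "2 * m" and ?X = "{0..<m}" and ?D = "d ^ m"
  have X: "?X \<subseteq> {0..<?M}" by auto
  have cC: "?M - card ?X = m" by simp
  obtain U l where U: "unitary ?D U" and \<rho>e: "\<rho> = U * real_diag_mat ?D l * mat_adjoint U" and l0: "\<And>k. k < ?D \<Longrightarrow> l k \<ge> 0"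
    using psd_spectral[OF \<rho>[unfolded density_op_iff_psd, THEN conjunct1]] by blast
  have Uc: "U \<in> carrier_mat ?D ?D" using U unfolding unitary_def by auto
  let ?P = "sub_index d (slist ?X)" and ?Q = "sub_index d (slist ({0..<?M} - ?X))"
  define Psi where "Psi = mat (d ^ ?M) 1 (\<lambda>(i,_). complex_of_real (sqrt (l (?Q i))) * U $$ (?P i, ?Q i))"
  have Psi: "Psi \<in> carrier_mat (d ^ ?M) 1" unfolding Psi_def by simp
  let ?\<tau> = "Psi * mat_adjoint Psi"
  have \<tau>e: "?\<tau> $$ (i,j) = Psi $$ (i,0) * cnj (Psi $$ (j,0))" if "i < d ^ ?M" "j < d ^ ?M" for i j
    using index_mult_adjoint[OF Psi Psi that] by simp
  have Psiphi: "Psi $$ (join_index d ?M ?X a c, 0) = complex_of_real (sqrt (l c)) * U $$ (a, c)"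
    if "a < ?D" "c < ?D" for a c
  proof -
    have "?P (join_index d ?M ?X a c) = a" using sub_index_join_index_fst[OF d X, of a c] that by simp
    moreover have "?Q (join_index d ?M ?X a c) = c" using sub_index_join_index_snd[OF d X, of c a] that by simp
    ultimately show ?thesis unfolding Psi_def using join_index_less[OF d X, of a c] by simp
  qed
  have sq: "complex_of_real (sqrt (l c)) * cnj (complex_of_real (sqrt (l c))) = complex_of_real (l c)"
    if "c < ?D" for c
    using l0 that by (simp flip: of_real_mult)
  have part1: "ptrace d ?M ?X ?\<tau> = \<rho>"
  proof (rule eq_matI)
    fix a b assume "a < dim_row \<rho>" "b < dim_col \<rho>"
    then have a: "a < ?D" and b: "b < ?D" using \<rho>e Uc by auto
    have a1: "a < d ^ card ?X" and b1: "b < d ^ card ?X" using a b by auto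
    have "ptrace d ?M ?X ?\<tau> $$ (a,b) = (\<Sum>c<?D. ?\<tau> $$ (join_index d ?M ?X a c, join_index d ?M ?X b c))"
      unfolding index_ptrace[OF d X a1 b1] cC ..
    also have "\<dots> = (\<Sum>c<?D. U $$ (a,c) * l c * cnj (U $$ (b,c)))"
    proof (intro sum.cong refl)
      fix c assume c: "c \<in> {..<?D}"
      then have "?\<tau> $$ (join_index d ?M ?X a c, join_index d ?M ?X b c) = Psi $$ (join_index d ?M ?X a c, 0) * cnj (Psi $$ (join_index d ?M ?X b c, 0))"
        by (intro \<tau>e join_index_less[OF d X])
      also have "\<dots> = (complex_of_real (sqrt (l c)) * U $$ (a, c)) * cnj (complex_of_real (sqrt (l c)) * U $$ (b, c))"
        using a b c by (simp only: Psiphi lessThan_iff)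
      also have "\<dots> = (complex_of_real (sqrt (l c)) * cnj (complex_of_real (sqrt (l c)))) * (U $$ (a,c) * cnj (U $$ (b,c)))"
        by (simp only: complex_cnj_mult ac_simps)
      also have "\<dots> = U $$ (a,c) * l c * cnj (U $$ (b,c))" using c sq by simp
      finally show "?\<tau> $$ (join_index d ?M ?X a c, join_index d ?M ?X b c) = U $$ (a,c) * l c * cnj (U $$ (b,c))" .
    qed
    also have "\<dots> = \<rho> $$ (a,b)" unfolding \<rho>e by (rule index_mult_real_diag_adjoint[OF Uc a b, symmetric])
    finally show "ptrace d ?M ?X ?\<tau> $$ (a,b) = \<rho> $$ (a,b)" .
  qed (insert ptrace_carrier[OF d X, of ?\<tau>] \<rho>e Uc, auto)
  from Psi part1 show ?thesis by (rule that)
qed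

lemma marg_entropy_araki_lieb:
  assumes d: "d > 0" and X: "X \<subseteq> {0..<m}" and \<rho>: "density_op (d ^ m) \<rho>"
  shows "marg_entropy d m X \<rho> \<le> vn_entropy \<rho> + marg_entropy d m ({0..<m} - X) \<rho>"
proof -
  let ?M = "2 * m"
  obtain Psi where Psi: "Psi \<in> carrier_mat (d ^ ?M) 1" and p1: "ptrace d ?M {0..<m} (Psi * mat_adjoint Psi) = \<rho>"
    using purification[OF d \<rho>] by blast
  let ?\<tau> = "Psi * mat_adjoint Psi"
  have X0: "{0..<m} \<subseteq> {0..<?M}" by auto
  have XM: "X \<subseteq> {0..<?M}" using X by auto
  have t: "trace (d ^ ?M) ?\<tau> = 1"
    using trace_ptrace[OF d X0, of ?\<tau>] p1 \<rho>[unfolded density_op_iff_psd] by simp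
  have \<tau>: "density_op (d ^ ?M) ?\<tau>" using psd_gram[OF Psi] t unfolding density_op_iff_psd by simp
  have p2: "marg_entropy d ?M ({0..<?M} - {0..<m}) ?\<tau> = vn_entropy \<rho>"
    using marg_entropy_pure_compl[OF d X0 Psi t] p1 unfolding marg_entropy_def by simp
  have mm: "m \<le> ?M" by simp
  have "marg_entropy d m X \<rho> = marg_entropy d ?M X ?\<tau>"
    unfolding marg_entropy_def p1[symmetric] ptrace_ptrace_prefix[OF d X mm] ..
  also have "\<dots> = marg_entropy d ?M ({0..<?M} - X) ?\<tau>" by (rule marg_entropy_pure_compl[OF d XM Psi t])
  also have "{0..<?M} - X = ({0..<m} - X) \<union> ({0..<?M} - {0..<m})" using X by auto
  also have "marg_entropy d ?M (({0..<m} - X) \<union> ({0..<?M} - {0..<m})) ?\<tau> \<le>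
      marg_entropy d ?M ({0..<m} - X) ?\<tau> + marg_entropy d ?M ({0..<?M} - {0..<m}) ?\<tau>"
    by (rule marg_entropy_subadditive[OF d _ _ _ \<tau>], auto)
  also have "marg_entropy d ?M ({0..<m} - X) ?\<tau> = marg_entropy d m ({0..<m} - X) \<rho>"
    unfolding marg_entropy_def p1[symmetric] ptrace_ptrace_prefix[OF d Diff_subset mm] ..
  finally show ?thesis unfolding p2 by simp
qed

lemma marg_entropy_subadditive_UN:
  assumes d: "d > 0" and \<rho>: "density_op (d ^ m) \<rho>" and J: "finite J"
    and P: "\<And>j. j \<in> J \<Longrightarrow> P j \<subseteq> {0..<m}"
    and disj: "\<And>i j. i \<in> J \<Longrightarrow> j \<in> J \<Longrightarrow> i \<noteq> j \<Longrightarrow> P i \<inter> P j = {}"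
  shows "marg_entropy d m (\<Union>j\<in>J. P j) \<rho> \<le> (\<Sum>j\<in>J. marg_entropy d m (P j) \<rho>)"
  using J P disj
proof (induction J rule: finite_induct)
  case empty
  have e: "{} \<subseteq> {0..<m}" by simp
  have "density_op (d ^ card {}) (ptrace d m {} \<rho>)" using density_op_ptrace[OF d e \<rho>] by simp
  then have "vn_entropy (ptrace d m {} \<rho>) \<le> ln (real (d ^ card {}))"
    using vn_entropy_le_ln_dim density_op_iff_psd by blast
  then show ?case unfolding marg_entropy_def by simp
next
  case (insert x F)
  have dj: "P x \<inter> (\<Union>j\<in>F. P j) = {}"
  proof -
    { fix j assume j: "j \<in> F"
      then have "x \<noteq> j" using insert.hyps by auto
      then have "P x \<inter> P j = {}" using insert.prems(2)[of x j] j by auto }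
    then show ?thesis by blast
  qed
  have s1: "P x \<subseteq> {0..<m}" using insert.prems(1) by auto
  have s2: "(\<Union>j\<in>F. P j) \<subseteq> {0..<m}" using insert.prems(1) by auto
  have "marg_entropy d m (P x \<union> (\<Union>j\<in>F. P j)) \<rho> \<le> marg_entropy d m (P x) \<rho> + marg_entropy d m (\<Union>j\<in>F. P j) \<rho>"
    by (rule marg_entropy_subadditive[OF d s1 s2 dj \<rho>])
  also have "marg_entropy d m (P x \<union> (\<Union>j\<in>F. P j)) \<rho> = marg_entropy d m (\<Union>j\<in>insert x F. P j) \<rho>" by simp
  finally have "marg_entropy d m (\<Union>j\<in>insert x F. P j) \<rho> \<le> marg_entropy d m (P x) \<rho> + marg_entropy d m (\<Union>j\<in>F. P j) \<rho>" .
  also have "marg_entropy d m (\<Union>j\<in>F. P j) \<rho> \<le> (\<Sum>j\<in>F. marg_entropy d m (P j) \<rho>)"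
    by (rule insert.IH, insert insert.prems, auto)
  finally show ?case using insert.hyps by simp
qed

lemma marg_entropy_singleton_le:
  assumes d: "d > 0" and t: "t < m" and \<rho>: "density_op (d ^ m) \<rho>"
  shows "marg_entropy d m {t} \<rho> \<le> ln (real d)"
proof -
  have e: "{t} \<subseteq> {0..<m}" using t by simp
  have "density_op (d ^ card {t}) (ptrace d m {t} \<rho>)" by (rule density_op_ptrace[OF d e \<rho>])
  then have "vn_entropy (ptrace d m {t} \<rho>) \<le> ln (real (d ^ card {t}))"
    using vn_entropy_le_ln_dim density_op_iff_psd by blast
  then show ?thesis unfolding marg_entropy_def by simp
qed

section \<open>Steps of the process\<close>

definition step_factors :: "nat \<Rightarrow> nat set" where
  "step_factors j = {2 * j - 2, 2 * j - 1}"

lemma S_step_eq_marg_entropy: "S_step d n \<rho> j = marg_entropy d (2 * n) (step_factors j) \<rho>"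
  unfolding S_step_def step_factors_def ..

lemma step_factors_subset: "j \<in> {1..n} \<Longrightarrow> step_factors j \<subseteq> {0..<2 * n}"
  unfolding step_factors_def by auto

lemma step_factors_disjoint:
  "i \<in> {1..n} \<Longrightarrow> j \<in> {1..n} \<Longrightarrow> i \<noteq> j \<Longrightarrow> step_factors i \<inter> step_factors j = {}"
  unfolding step_factors_def by auto

lemma UN_step_factors_remove:
  assumes k: "k \<in> {1..n}"
  shows "(\<Union>j\<in>{1..n} - {k}. step_factors j) = {0..<2 * n} - step_factors k"
proof
  show "(\<Union>j\<in>{1..n} - {k}. step_factors j) \<subseteq> {0..<2 * n} - step_factors k"
    using step_factors_subset step_factors_disjoint k by blast
  show "{0..<2 * n} - step_factors k \<subseteq> (\<Union>j\<in>{1..n} - {k}. step_factors j)"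
  proof
    fix t assume t: "t \<in> {0..<2 * n} - step_factors k"
    have "t \<in> step_factors (t div 2 + 1)" unfolding step_factors_def by auto
    moreover from this have "t div 2 + 1 \<in> {1..n} - {k}" using t by auto
    ultimately show "t \<in> (\<Union>j\<in>{1..n} - {k}. step_factors j)" by blast
  qed
qed

lemma nonmarkov_corr_le_twice_steps:
  assumes d: "d > 0" and \<rho>: "density_op (d ^ (2 * n)) \<rho>" and k: "k \<in> {1..n}"
  shows "nonmarkov_corr d n \<rho> \<le> 2 * (\<Sum>j\<in>{1..n} - {k}. S_step d n \<rho> j)"
proof -
  have "S_step d n \<rho> k \<le> vn_entropy \<rho> + marg_entropy d (2 * n) ({0..<2 * n} - step_factors k) \<rho>"
    unfolding S_step_eq_marg_entropy by (rule marg_entropy_araki_lieb[OF d step_factors_subset[OF k] \<rho>])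
  moreover have "marg_entropy d (2 * n) ({0..<2 * n} - step_factors k) \<rho> \<le> (\<Sum>j\<in>{1..n} - {k}. S_step d n \<rho> j)"
    unfolding UN_step_factors_remove[OF k, symmetric] S_step_eq_marg_entropy
    by (rule marg_entropy_subadditive_UN[OF d \<rho>])
      (simp, meson DiffD1 step_factors_subset, meson DiffD1 step_factors_disjoint)
  moreover have "(\<Sum>j = 1..n. S_step d n \<rho> j) = S_step d n \<rho> k + (\<Sum>j\<in>{1..n} - {k}. S_step d n \<rho> j)"
    using k by (simp add: sum.remove)
  ultimately show ?thesis unfolding nonmarkov_corr_def by simp
qed

lemma S_step_le_markov_defect:
  assumes d: "d > 0" and \<rho>: "density_op (d ^ (2 * n)) \<rho>" and j: "j \<in> {1..n}"
  shows "S_step d n \<rho> j \<le> 2 * ln (real d) - markov_corr d n \<rho> j"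
proof -
  have "marg_entropy d (2 * n) {2 * j - 2} \<rho> \<le> ln (real d)"
    using j by (intro marg_entropy_singleton_le[OF d _ \<rho>]) auto
  moreover have "marg_entropy d (2 * n) {2 * j - 1} \<rho> \<le> ln (real d)"
    using j by (intro marg_entropy_singleton_le[OF d _ \<rho>]) auto
  ultimately show ?thesis unfolding markov_corr_def by simp
qed

theorem proposition1:
  fixes n d :: nat and \<rho> :: "complex mat" and k :: nat
  assumes "n \<ge> 1" and "d \<ge> 2"
    and "density_op (d ^ (2 * n)) \<rho>"
    and "1 \<le> k" and "k \<le> n"
  shows "nonmarkov_corr d n \<rho>
           \<le> 2 * (\<Sum>j \<in> {1..n} - {k}. 2 * ln (real d) - markov_corr d n \<rho> j)"
proof -
  have d: "d > 0" and k: "k \<in> {1..n}" using assms by auto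
  have "nonmarkov_corr d n \<rho> \<le> 2 * (\<Sum>j\<in>{1..n} - {k}. S_step d n \<rho> j)"
    by (rule nonmarkov_corr_le_twice_steps[OF d assms(3) k])
  also have "\<dots> \<le> 2 * (\<Sum>j\<in>{1..n} - {k}. 2 * ln (real d) - markov_corr d n \<rho> j)"
    using S_step_le_markov_defect[OF d assms(3)] by (intro mult_left_mono sum_mono) auto
  finally show ?thesis .
qed

end
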